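(* Let $1<r\le 2$ and $r\le s$. Then there exists a constant $C=C(r,s)>0$ such that for every sequence $(J_m)$ of index sets, each of degree at most $m$, and every $n$ with $\frac{n}{e(\log n)^{r'(\frac1r-\frac1s)}}\le m$, $$\widehat{\boldsymbol{\lambda}}\big(\mathcal{P}_{J_m}(\ell_{r,s}^n)\big)\le C^m(\log n)^{m(\frac1r-\frac1s)}.$$ In particular, for such $m,n$, $\boldsymbol{\chi_{\mathrm{mon}}}\big(\mathcal{P}_{J_m}(\ell_{r,s}^n)\big)\le C^m(\log n)^{m(\frac1r-\frac1s)}$ and $\boldsymbol{\lambda}\big(\mathcal{P}_{J_m}(\ell_{r,s}^n)\big)\le C^m(\log n)^{m(\frac1r-\frac1s)}$ (possibly with a larger constant $C$).
   Context: $r'$ is the conjugate exponent of $r$. An index set is a subset of $\mathbb{N}_0^{(\mathbb{N})}$; degree at most $m$ means $|\alpha|\le m$ for all its elements. $\ell_{r,s}^n$ is $\mathbb{C}^n$ with the Lorentz quasi-norm $\|z\|_{\ell_{r,s}}=\|(z_k^*k^{1/r-1/s})_k\|_{\ell_s}$. $\mathcal{P}_J(X_n)$: polynomials $\sum_{\alpha\in J\cap\mathbb{N}_0^n}c_\alpha z^\alpha$ with sup norm over the open unit ball $B_{X_n}$. $c_{X_n}(\alpha)=1/\sup_{z\in B_{X_n}}|z^\alpha|$ and $\widehat{\boldsymbol{\lambda}}(\mathcal{P}_J(X_n))=\sup_{z\in B_{X_n}}\sum_{\alpha\in J}c_{X_n}(\alpha)|z^\alpha|$. $\boldsymbol{\lambda}$: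 projection constant; $\boldsymbol{\chi_{\mathrm{mon}}}$: unconditional basis constant of the monomial basis. *)

theory Defs
  imports "HOL-Analysis.Analysis" "HOL-Library.Extended_Real"
begin

text \<open>Multi-indices: finitely supported functions nat => nat. Points of C^n: functions
  nat => complex vanishing from index n on. The parameter s ranges over (1,\<infinity>] (ereal).\<close>

definition deg :: "(nat \<Rightarrow> nat) \<Rightarrow> nat" where
  "deg \<alpha> = (\<Sum>k\<in>{k. \<alpha> k \<noteq> 0}. \<alpha> k)"

definition is_index_set :: "(nat \<Rightarrow> nat) set \<Rightarrow> bool" where
  "is_index_set J \<longleftrightarrow> (\<forall>\<alpha>\<in>J. finite {k. \<alpha> k \<noteq> 0})"

definition index_cut :: "(nat \<Rightarrow> nat) set \<Rightarrow> nat \<Rightarrow> (nat \<Rightarrow> nat) set" where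
  "index_cut J n = {\<alpha>\<in>J. \<forall>k\<ge>n. \<alpha> k = 0}"

definition monom :: "nat \<Rightarrow> (nat \<Rightarrow> nat) \<Rightarrow> (nat \<Rightarrow> complex) \<Rightarrow> complex" where
  "monom n \<alpha> z = (\<Prod>k<n. z k ^ \<alpha> k)"

definition conj_exp :: "real \<Rightarrow> real" where
  "conj_exp r = r / (r - 1)"

definition inv_s :: "ereal \<Rightarrow> real" where
  "inv_s s = (if s = \<infinity> then 0 else 1 / real_of_ereal s)"

text \<open>decreasing rearrangement z^*_k, for 1 \<le> k \<le> n\<close>
definition decr_rearr :: "nat \<Rightarrow> (nat \<Rightarrow> complex) \<Rightarrow> nat \<Rightarrow> real" where
  "decr_rearr n z k = rev (sort (map (\<lambda>i. cmod (z i)) [0..<n])) ! (k - 1)"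

definition lorentz_norm :: "real \<Rightarrow> ereal \<Rightarrow> nat \<Rightarrow> (nat \<Rightarrow> complex) \<Rightarrow> real" where
  "lorentz_norm r s n z =
     (if s = \<infinity> then Max (insert 0 ((\<lambda>k. decr_rearr n z k * real k powr (1/r)) ` {1..n}))
      else (\<Sum>k=1..n. (decr_rearr n z k * real k powr (1/r - inv_s s)) powr real_of_ereal s)
             powr (inv_s s))"

definition lball :: "real \<Rightarrow> ereal \<Rightarrow> nat \<Rightarrow> (nat \<Rightarrow> complex) set" where
  "lball r s n = {z. (\<forall>k\<ge>n. z k = 0) \<and> lorentz_norm r s n z < 1}"

definition c_coef :: "real \<Rightarrow> ereal \<Rightarrow> nat \<Rightarrow> (nat \<Rightarrow> nat) \<Rightarrow> real" where
  "c_coef r s n \<alpha> = 1 / (SUP z\<in>lball r s n. cmod (monom n \<alpha> z))"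

definition hat_lambda :: "real \<Rightarrow> ereal \<Rightarrow> (nat \<Rightarrow> nat) set \<Rightarrow> nat \<Rightarrow> real" where
  "hat_lambda r s J n =
     (SUP z\<in>lball r s n. \<Sum>\<alpha>\<in>index_cut J n. c_coef r s n \<alpha> * cmod (monom n \<alpha> z))"

definition poly_eval :: "(nat \<Rightarrow> nat) set \<Rightarrow> nat \<Rightarrow> ((nat \<Rightarrow> nat) \<Rightarrow> complex)
    \<Rightarrow> (nat \<Rightarrow> complex) \<Rightarrow> complex" where
  "poly_eval J n c z = (\<Sum>\<alpha>\<in>index_cut J n. c \<alpha> * monom n \<alpha> z)"

definition sup_norm :: "real \<Rightarrow> ereal \<Rightarrow> nat \<Rightarrow> ((nat \<Rightarrow> complex) \<Rightarrow> complex) \<Rightarrow> real" where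
  "sup_norm r s n f = (SUP z\<in>lball r s n. cmod (f z))"

definition chi_mon :: "real \<Rightarrow> ereal \<Rightarrow> (nat \<Rightarrow> nat) set \<Rightarrow> nat \<Rightarrow> real" where
  "chi_mon r s J n = Inf {K. K \<ge> 0 \<and>
     (\<forall>c \<theta>. (\<forall>\<alpha>. cmod (\<theta> \<alpha>) = 1) \<longrightarrow>
        sup_norm r s n (poly_eval J n (\<lambda>\<alpha>. \<theta> \<alpha> * c \<alpha>)) \<le> K * sup_norm r s n (poly_eval J n c))}"

text \<open>projection constant of P_J(\<ell>_{r,s}^n), computed via its isometric copy inside the
  injective space \<ell>_\<infinity>(B) of bounded functions on the open unit ball B\<close>
definition proj_const :: "real \<Rightarrow> ereal \<Rightarrow> (nat \<Rightarrow> nat) set \<Rightarrow> nat \<Rightarrow> real" where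
  "proj_const r s J n = Inf {K. K \<ge> 0 \<and>
     (\<exists>Q :: ((nat \<Rightarrow> complex) \<Rightarrow> complex) \<Rightarrow> ((nat \<Rightarrow> complex) \<Rightarrow> complex).
        (\<forall>f g a b. bdd_above ((\<lambda>z. cmod (f z)) ` lball r s n) \<longrightarrow>
                   bdd_above ((\<lambda>z. cmod (g z)) ` lball r s n) \<longrightarrow>
           (\<forall>z\<in>lball r s n. Q (\<lambda>w. a * f w + b * g w) z = a * Q f z + b * Q g z)) \<and>
        (\<forall>f. bdd_above ((\<lambda>z. cmod (f z)) ` lball r s n) \<longrightarrow>
           (\<exists>c. \<forall>z\<in>lball r s n. Q f z = poly_eval J n c z)) \<and>
        (\<forall>c. \<forall>z\<in>lball r s n. Q (poly_eval J n c) z = poly_eval J n c z) \<and>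
        (\<forall>f. bdd_above ((\<lambda>z. cmod (f z)) ` lball r s n) \<longrightarrow>
           sup_norm r s n (Q f) \<le> K * sup_norm r s n f))}"

end

theory Submission
  imports Defs
begin

text \<open>Write b = 1/r - 1/s and L = ln n. The unit ball of \<ell>_{r,s}^n contains the unit ball
  of \<ell>_r^n, lies in the \<ell>_r-ball of radius (1 + L)^b, and has \<ell>_1-radius O(n^(1-1/r))
  (Hoelder against the weights k^b). Evaluating z^\<alpha> at the test point with coordinates
  (\<alpha>_j/|\<alpha>|)^(1/r)/2 gives c(\<alpha>) \<le> 2^|\<alpha>| (e^|\<alpha>| |\<alpha>|!/\<alpha>!)^(1/r). With the scale
  t = m^(1/r)/L^b, the sum of c(\<alpha>)|z^\<alpha>| over |\<alpha>| \<le> m is therefore at most (4e L^b)^m times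
  \<Prod>_j \<Sum>_a (t|z_j|)^a/(a!)^(1/r) \<le> exp (5 \<Sum>_j (t|z_j| + (t|z_j|)^r)), and the \<ell>_1- and
  \<ell>_r-bounds together with the hypothesis n \<le> e L^(r'b) m make the exponent O(m).
  For \<chi>_mon and the projection constant, the coefficient of z^\<alpha> in a bounded function is
  recovered by averaging over the torus through the test point (roots of unity of order m + 1),
  so it is bounded by the same weight times the sup norm.\<close>

section \<open>Decreasing rearrangement\<close>

lemma sum_decr_rearr: "(\<Sum>k=1..n. g (decr_rearr n z k)) = (\<Sum>i<n. g (cmod (z i)))"
proof -
  let ?xs = "map (\<lambda>i. cmod (z i)) [0..<n]"
  have "(\<Sum>k=1..n. g (decr_rearr n z k)) = (\<Sum>k<n. g (rev (sort ?xs) ! k))"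
    by (simp add: decr_rearr_def sum.atLeast1_atMost_eq)
  also have "\<dots> = sum_list (map g (rev (sort ?xs)))"
    by (simp add: sum_list_sum_nth atLeast0LessThan)
  also have "\<dots> = sum_list (map g ?xs)"
    by (simp only: sum_mset_sum_list[symmetric] mset_map mset_rev mset_sort)
  also have "\<dots> = (\<Sum>i<n. g (cmod (z i)))"
    by (simp add: sum_list_sum_nth atLeast0LessThan)
  finally show ?thesis .
qed

lemma decr_rearr_antimono:
  assumes "1 \<le> i" "i \<le> j" "j \<le> n"
  shows "decr_rearr n z j \<le> decr_rearr n z i"
proof -
  let ?L = "sort (map (\<lambda>i. cmod (z i)) [0..<n])"
  have "decr_rearr n z j = ?L ! (n - 1 - (j - 1))"
    using assms by (simp add: decr_rearr_def rev_nth)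
  also have "\<dots> \<le> ?L ! (n - 1 - (i - 1))"
    by (rule sorted_nth_mono) (use assms in auto)
  also have "\<dots> = decr_rearr n z i"
    using assms by (simp add: decr_rearr_def rev_nth)
  finally show ?thesis .
qed

lemma decr_rearr_nonneg:
  assumes "1 \<le> k" "k \<le> n"
  shows "0 \<le> decr_rearr n z k"
proof -
  let ?xs = "rev (sort (map (\<lambda>i. cmod (z i)) [0..<n]))"
  have "?xs ! (k - 1) \<in> set ?xs"
    using assms by (intro nth_mem) simp
  then show ?thesis by (auto simp: decr_rearr_def)
qed

lemma lorentz_norm_cong:
  assumes "\<And>i. i < n \<Longrightarrow> cmod (u i) = cmod (z i)"
  shows "lorentz_norm r s n u = lorentz_norm r s n z"
proof -
  have "map (\<lambda>i. cmod (u i)) [0..<n] = map (\<lambda>i. cmod (z i)) [0..<n]"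
    using assms by (intro map_cong) auto
  then have "decr_rearr n u = decr_rearr n z"
    by (intro ext) (simp only: decr_rearr_def)
  then show ?thesis by (simp add: lorentz_norm_def)
qed

lemma decr_rearr_powr_le:
  assumes "1 \<le> k" "k \<le> n" "0 \<le> r"
  shows "real k * decr_rearr n z k powr r \<le> (\<Sum>i<n. cmod (z i) powr r)"
proof -
  have "real k * decr_rearr n z k powr r = (\<Sum>i=1..k. decr_rearr n z k powr r)" by simp
  also have "\<dots> \<le> (\<Sum>i=1..k. decr_rearr n z i powr r)"
    using assms by (intro sum_mono powr_mono2 decr_rearr_nonneg decr_rearr_antimono) auto
  also have "\<dots> \<le> (\<Sum>i=1..n. decr_rearr n z i powr r)"
    by (intro sum_mono2) (use assms in auto)
  also have "\<dots> = (\<Sum>i<n. cmod (z i) powr r)" by (rule sum_decr_rearr)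
  finally show ?thesis .
qed

lemma Holder_inequality_sum:
  fixes a b :: "'i \<Rightarrow> real"
  assumes I: "finite I" and pq: "p > 1" "q > 1" "1/p + 1/q = 1"
    and a: "\<And>i. i \<in> I \<Longrightarrow> a i \<ge> 0" and b: "\<And>i. i \<in> I \<Longrightarrow> b i \<ge> 0"
  shows "(\<Sum>i\<in>I. a i * b i) \<le> (\<Sum>i\<in>I. a i powr p) powr (1/p) * (\<Sum>i\<in>I. b i powr q) powr (1/q)"
proof -
  define A where "A = (\<Sum>i\<in>I. a i powr p)"
  define B where "B = (\<Sum>i\<in>I. b i powr q)"
  have A0: "A \<ge> 0" and B0: "B \<ge> 0" unfolding A_def B_def by (auto intro: sum_nonneg)
  show ?thesis
  proof (cases "A = 0 \<or> B = 0")
    case True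
    then have "(\<forall>i\<in>I. a i = 0) \<or> (\<forall>i\<in>I. b i = 0)"
      unfolding A_def B_def using I a b
      by (subst (asm) (1 2) sum_nonneg_eq_0_iff) auto
    then show ?thesis by auto
  next
    case False
    then have Ap: "A > 0" and Bp: "B > 0" using A0 B0 by auto
    define \<alpha> where "\<alpha> = A powr (1/p)"
    define \<beta> where "\<beta> = B powr (1/q)"
    have ap: "\<alpha> > 0" "\<beta> > 0" using Ap Bp by (auto simp: \<alpha>_def \<beta>_def)
    have ap2: "\<alpha> powr p = A" "\<beta> powr q = B" using Ap Bp pq
      by (auto simp: \<alpha>_def \<beta>_def powr_powr)
    have Young: "a i * b i \<le> \<alpha> * \<beta> * (a i powr p / (A * p) + b i powr q / (B * q))"
      if i: "i \<in> I" for i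
    proof -
      have "a i * b i = \<alpha> * \<beta> * ((a i / \<alpha>) * (b i / \<beta>))" using ap by simp
      also have "\<dots> \<le> \<alpha> * \<beta> * ((a i / \<alpha>) powr p / p + (b i / \<beta>) powr q / q)"
        using ap a[OF i] b[OF i] pq by (intro mult_left_mono Youngs_inequality) auto
      also have "(a i / \<alpha>) powr p = a i powr p / A"
        using ap a[OF i] ap2 by (simp add: powr_divide)
      also have "(b i / \<beta>) powr q = b i powr q / B"
        using ap b[OF i] ap2 by (simp add: powr_divide)
      finally show ?thesis by (simp add: field_simps)
    qed
    have "(\<Sum>i\<in>I. a i * b i) \<le> (\<Sum>i\<in>I. \<alpha> * \<beta> * (a i powr p / (A * p) + b i powr q / (B * q)))"
      using Young by (rule sum_mono)
    also have "\<dots> = \<alpha> * \<beta> * ((\<Sum>i\<in>I. a i powr p) / (A * p) + (\<Sum>i\<in>I. b i powr q) / (B * q))"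
      by (simp only: sum_distrib_left[symmetric] sum.distrib sum_divide_distrib[symmetric])
    also have "\<dots> = \<alpha> * \<beta>"
      using Ap Bp pq by (simp add: A_def[symmetric] B_def[symmetric])
    finally show ?thesis by (simp add: \<alpha>_def \<beta>_def A_def B_def)
  qed
qed

lemma sum_inverse_le_one_plus_ln:
  assumes "n \<ge> 1"
  shows "(\<Sum>k=1..n. 1 / real k) \<le> 1 + ln (real n)"
  using assms
proof (induct n rule: dec_induct)
  case base then show ?case by simp
next
  case (step n)
  have "ln (real n / real (Suc n)) \<le> real n / real (Suc n) - 1"
    using step by (intro ln_le_minus_one) auto
  also have "\<dots> = - 1 / real (Suc n)" by (simp add: field_simps)
  finally have "1 / real (Suc n) \<le> ln (real (Suc n)) - ln (real n)"
    using step by (simp add: ln_div)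
  then show ?case using step by simp
qed

lemma sum_powr_neg_le:
  assumes p: "0 \<le> p" "p < 1"
  shows "(\<Sum>k=1..n. real k powr (-p)) \<le> real n powr (1-p) / (1-p)"
proof (induct n)
  case 0 then show ?case by simp
next
  case (Suc n)
  define q where "q = 1 - p"
  have q: "0 < q" "q \<le> 1" using p by (auto simp: q_def)
  define x where "x = real (Suc n)"
  have x: "x \<ge> 1" by (simp add: x_def)
  \<comment> \<open>concavity of \<open>x powr q\<close>, via the weighted AM-GM inequality\<close>
  have step: "(x - 1) powr q \<le> x powr q - q * x powr (-p)"
  proof (cases "n = 0")
    case True then show ?thesis using q by (simp add: x_def)
  next
    case False
    then have x1: "x - 1 > 0" by (simp add: x_def)
    have "(x - 1) powr q * x powr (1 - q) \<le> q * (x - 1) + (1 - q) * x"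
      using Youngs_inequality_0[of q "1-q" "x-1" x] q x1 x by simp
    also have "\<dots> = x - q" by (simp add: algebra_simps)
    finally have "(x - 1) powr q \<le> (x - q) / x powr (1 - q)"
      using x by (simp add: field_simps)
    also have "(x - q) / x powr (1 - q) = x powr q - q * x powr (-p)"
    proof -
      have "x / x powr (1 - q) = x powr q"
        using x by (simp add: powr_diff q_def)
      moreover have "1 / x powr (1 - q) = x powr (-p)"
        using x by (simp add: q_def powr_minus_divide)
      ultimately show ?thesis
        by (simp add: diff_divide_distrib) (metis times_divide_eq_right mult_1_right)
    qed
    finally show ?thesis .
  qed
  have "(\<Sum>k=1..Suc n. real k powr (-p)) = (\<Sum>k=1..n. real k powr (-p)) + x powr (-p)"
    by (simp add: x_def)
  also have "\<dots> \<le> (x - 1) powr q / q + x powr (-p)"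
    using Suc by (simp add: q_def x_def)
  also have "\<dots> \<le> x powr q / q"
    using divide_right_mono[OF step, of q] q by (simp add: diff_divide_distrib)
  finally show ?case by (simp add: q_def x_def)
qed

lemma sum_power_div_fact_le_exp:
  fixes x :: real
  assumes "x \<ge> 0"
  shows "(\<Sum>j\<le>N. x ^ j / fact j) \<le> exp x"
proof -
  have s: "(\<lambda>j. x ^ j / fact j) sums exp x"
    using exp_converges[of x] by (simp add: divide_inverse mult.commute scaleR_conv_of_real)
  show ?thesis
    using sum_le_suminf[OF sums_summable[OF s], of "{..N}"] sums_unique[OF s] assms by simp
qed

lemma power_le_exp_mult_fact:
  fixes x :: real
  assumes "x \<ge> 0"
  shows "x ^ N \<le> exp x * fact N"
proof -
  have "x ^ N / fact N \<le> (\<Sum>j\<le>N. x ^ j / fact j)"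
    using assms by (intro member_le_sum) auto
  also have "\<dots> \<le> exp x" by (rule sum_power_div_fact_le_exp[OF assms])
  finally show ?thesis by (simp add: field_simps)
qed

lemma two_power_le_fact: "(2::real) ^ (a - 1) \<le> fact a"
proof (induct a)
  case 0 then show ?case by simp
next
  case (Suc a)
  show ?case
  proof (cases "a = 0")
    case True then show ?thesis by simp
  next
    case False
    have "(2::real) ^ (Suc a - 1) = 2 * 2 ^ (a - 1)" using False by (cases a) auto
    also have "\<dots> \<le> 2 * fact a" using Suc by simp
    also have "\<dots> \<le> real (Suc a) * fact a" using False by (intro mult_right_mono) auto
    finally show ?thesis by (simp add: fact_Suc)
  qed
qed

lemma powr_power_commute:
  fixes x :: real
  assumes "x \<ge> 0"
  shows "(x powr c) ^ a = (x ^ a) powr c"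
proof (cases "x = 0")
  case True then show ?thesis by (cases a) auto
next
  case False
  then show ?thesis
    using assms by (simp add: powr_realpow[symmetric] powr_powr mult.commute)
qed

lemma four_thirds_power_le_fact_powr:
  assumes "1 < r" "r \<le> 2"
  shows "(4/3) ^ (a - 1) \<le> (fact a :: real) powr (1/r)"
proof -
  have "(4/3::real) ^ (a - 1) \<le> sqrt 2 ^ (a - 1)"
  proof (rule power_mono)
    have "(4/3::real) = sqrt (16/9)" by (simp add: real_sqrt_divide)
    also have "\<dots> \<le> sqrt 2" by simp
    finally show "(4/3::real) \<le> sqrt 2" .
  qed simp
  also have "sqrt 2 ^ (a - 1) = ((2::real) ^ (a - 1)) powr (1/2)"
    by (simp add: powr_half_sqrt[symmetric] powr_power_commute)
  also have "\<dots> \<le> (fact a) powr (1/2)"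
    by (intro powr_mono2 two_power_le_fact) auto
  also have "\<dots> \<le> (fact a) powr (1/r)"
    using assms by (intro powr_mono) (auto simp: field_simps)
  finally show ?thesis .
qed

lemma sum_power_div_fact_powr_le_linear:
  fixes u :: real
  assumes r: "1 < r" "r \<le> 2" and u: "0 \<le> u" "u \<le> 1"
  shows "(\<Sum>a\<le>M. u ^ a / (fact a) powr (1/r)) \<le> 1 + 4 * u"
proof -
  have "(\<Sum>a\<in>{1..M}. u ^ a / (fact a) powr (1/r)) \<le> (\<Sum>a\<in>{1..M}. u * (3/4) ^ (a - 1))"
  proof (rule sum_mono)
    fix a assume a: "a \<in> {1..M}"
    have "u ^ a = u * u ^ (a - 1)" using a by (cases a) auto
    also have "\<dots> \<le> u" using u by (simp add: mult_left_le power_le_one)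
    finally have "u ^ a / (fact a) powr (1/r) \<le> u / (4/3) ^ (a - 1)"
      using four_thirds_power_le_fact_powr[OF r] u by (intro frac_le) auto
    then show "u ^ a / (fact a) powr (1/r) \<le> u * (3/4) ^ (a - 1)"
      by (simp add: power_divide field_simps)
  qed
  also have "(\<Sum>a\<in>{1..M}. u * (3/4::real) ^ (a - 1)) = u * (\<Sum>i<M. (3/4) ^ i)"
    by (simp add: sum.atLeast1_atMost_eq sum_distrib_left)
  also have "\<dots> \<le> u * 4"
    using u by (intro mult_left_mono) (simp_all add: sum_gp_strict)
  finally have "(\<Sum>a\<in>{1..M}. u ^ a / (fact a) powr (1/r)) \<le> 4 * u" by simp
  moreover have "{..M} = insert 0 {1..M}" by auto
  ultimately show ?thesis by simp
qed

lemma powr_inverse_le_one_plus: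
  fixes X :: real
  assumes "0 \<le> X" "1 \<le> r"
  shows "X powr (1/r) \<le> 1 + X"
proof (cases "X \<le> 1")
  case True
  then have "X powr (1/r) \<le> 1" using assms by (intro powr_le1) auto
  then show ?thesis using assms by simp
next
  case False
  then have "X powr (1/r) \<le> X powr 1" using assms by (intro powr_mono) auto
  then show ?thesis using assms by simp
qed

lemma sum_power_div_fact_powr_le_exp_powr:
  fixes u :: real
  assumes r: "1 < r" "r \<le> 2" and u: "u \<ge> 0"
  shows "(\<Sum>a\<le>M. u ^ a / (fact a) powr (1/r)) \<le> 2 + exp (4 * u powr r)"
proof -
  define v where "v = (2 * u) powr r"
  have v0: "v \<ge> 0" by (simp add: v_def)
  \<comment> \<open>each term is (1/2)^a * X powr (1/r) with X = v^a / a!, and X powr (1/r) \<le> 1 + X\<close>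
  have split_term: "u ^ a / (fact a) powr (1/r) \<le> (1/2) ^ a + v ^ a / fact a" for a
  proof -
    define X where "X = v ^ a / fact a"
    have X0: "X \<ge> 0" using v0 by (simp add: X_def)
    have "v ^ a = ((2 * u) ^ a) powr r" unfolding v_def using u by (simp add: powr_power_commute)
    then have "X powr (1/r) = (((2 * u) ^ a) powr r) powr (1/r) / (fact a) powr (1/r)"
      unfolding X_def by (simp add: powr_divide)
    also have "(((2 * u) ^ a) powr r) powr (1/r) = (2 * u) ^ a"
      using r u by (simp add: powr_powr)
    finally have "u ^ a / (fact a) powr (1/r) = (1/2) ^ a * X powr (1/r)"
      by (simp add: power_mult_distrib power_divide)
    also have "\<dots> \<le> (1/2) ^ a * (1 + X)"
      using powr_inverse_le_one_plus[OF X0] r by (intro mult_left_mono) auto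
    also have "\<dots> \<le> (1/2) ^ a + X"
      using mult_left_le_one_le[OF X0, of "(1/2) ^ a"] by (simp add: distrib_left power_le_one)
    finally show ?thesis by (simp add: X_def)
  qed
  have "(\<Sum>a\<le>M. u ^ a / (fact a) powr (1/r)) \<le> (\<Sum>a\<le>M. (1/2::real) ^ a) + (\<Sum>a\<le>M. v ^ a / fact a)"
    by (simp only: sum.distrib[symmetric]) (intro sum_mono split_term)
  also have "(\<Sum>a\<le>M. (1/2::real) ^ a) \<le> 2"
    by (simp add: lessThan_Suc_atMost[symmetric] sum_gp_strict)
  also have "(\<Sum>a\<le>M. v ^ a / fact a) \<le> exp v" by (rule sum_power_div_fact_le_exp[OF v0])
  also have "v \<le> 4 * u powr r"
  proof -
    have "2 powr r \<le> 2 powr 2" using r by (intro powr_mono) auto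
    then show ?thesis using u by (simp add: v_def powr_mult mult_right_mono)
  qed
  finally show ?thesis by simp
qed

lemma sum_power_div_fact_powr_le_exp:
  fixes u :: real
  assumes r: "1 < r" "r \<le> 2" and u: "u \<ge> 0"
  shows "(\<Sum>a\<le>M. u ^ a / (fact a) powr (1/r)) \<le> exp (5 * (u + u powr r))"
proof (cases "u \<le> 1")
  case True
  have "(\<Sum>a\<le>M. u ^ a / (fact a) powr (1/r)) \<le> 1 + 4 * u"
    using sum_power_div_fact_powr_le_linear[OF r u True] .
  also have "\<dots> \<le> exp (4 * u)" by (rule exp_ge_add_one_self)
  also have "\<dots> \<le> exp (5 * (u + u powr r))" using u by simp
  finally show ?thesis .
next
  case False
  define w where "w = u powr r"
  have w1: "w \<ge> 1" using False r by (simp add: w_def ge_one_powr_ge_zero)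
  have "exp (4 * w) \<ge> 5" using exp_ge_add_one_self[of "4 * w"] w1 by linarith
  moreover have "exp w \<ge> 2" using exp_ge_add_one_self[of w] w1 by linarith
  ultimately have "exp (4 * w) * 2 \<le> exp (4 * w) * exp w" by (intro mult_left_mono) auto
  then have "2 + exp (4 * w) \<le> exp (5 * w)"
    using \<open>exp (4 * w) \<ge> 5\<close> by (simp add: exp_add[symmetric])
  moreover have "(\<Sum>a\<le>M. u ^ a / (fact a) powr (1/r)) \<le> 2 + exp (4 * w)"
    using sum_power_div_fact_powr_le_exp_powr[OF r u] by (simp add: w_def)
  moreover have "exp (5 * w) \<le> exp (5 * (u + u powr r))" using u by (simp add: w_def)
  ultimately show ?thesis by linarith
qed

lemma ln_ge_half:
  assumes "n \<ge> 2"
  shows "ln (real n) \<ge> 1/2"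
proof -
  have "ln 2 \<le> ln (real n)" using assms by simp
  then show ?thesis using ln2_ge_two_thirds by linarith
qed

section \<open>The unit ball of \<open>\<ell>_{r,s}^n\<close>\<close>

lemma ereal_ge_real_cases:
  assumes "ereal r \<le> s"
  obtains "s = \<infinity>" | \<sigma> where "s = ereal \<sigma>" "r \<le> \<sigma>"
  using assms by (cases s) auto

lemma inv_s_ereal [simp]: "inv_s (ereal \<sigma>) = 1/\<sigma>"
  by (simp add: inv_s_def)

lemma inv_s_infinity [simp]: "inv_s \<infinity> = 0"
  by (simp add: inv_s_def)

lemma lorentz_norm_infinity:
  "lorentz_norm r \<infinity> n z = Max (insert 0 ((\<lambda>k. decr_rearr n z k * real k powr (1/r)) ` {1..n}))"
  by (simp add: lorentz_norm_def)

lemma lorentz_norm_ereal: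
  "lorentz_norm r (ereal \<sigma>) n z =
     (\<Sum>k=1..n. (decr_rearr n z k * real k powr (1/r - 1/\<sigma>)) powr \<sigma>) powr (1/\<sigma>)"
  by (simp add: lorentz_norm_def)

lemma powr_less_one_iff:
  fixes x :: real
  assumes "0 \<le> x" "e > 0"
  shows "x powr e < 1 \<longleftrightarrow> x < 1"
  using powr_less_mono2[of e x 1] ge_one_powr_ge_zero[of x e] assms by force

lemma lorentz_exponent_bounds:
  assumes "r > 1" "ereal r \<le> s"
  shows "0 \<le> 1/r - inv_s s" "r * (1/r - inv_s s) \<le> 1" "1/r - inv_s s \<le> 1"
proof -
  have i: "0 \<le> inv_s s" "inv_s s \<le> 1/r"
    using assms by (cases rule: ereal_ge_real_cases[OF assms(2)]; simp add: field_simps)+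
  show "0 \<le> 1/r - inv_s s" using i by simp
  have "r * (1/r - inv_s s) = 1 - r * inv_s s" using assms by (simp add: right_diff_distrib)
  then show "r * (1/r - inv_s s) \<le> 1" using i assms by simp
  have "1/r \<le> 1" using assms by simp
  then show "1/r - inv_s s \<le> 1" using i by linarith
qed

lemma powr_weight_le_if_weak_bound:
  fixes d k S :: real
  assumes r: "1 < r" "r \<le> \<sigma>" and d: "0 \<le> d" and k: "0 < k" and weak: "d powr r * k \<le> S"
  shows "(d * k powr (1/r - 1/\<sigma>)) powr \<sigma> \<le> d powr r * S powr (\<sigma>/r - 1)"
proof (cases "d = 0")
  case True
  then show ?thesis using r by simp
next
  case False
  then have dp: "d > 0" using d by simp
  have "(1/r - 1/\<sigma>) * \<sigma> = \<sigma>/r - 1" "r * (\<sigma>/r - 1) = \<sigma> - r"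
    using r by (simp_all add: field_simps)
  then have "(d * k powr (1/r - 1/\<sigma>)) powr \<sigma> = d powr r * (d powr r * k) powr (\<sigma>/r - 1)"
    using dp k r by (simp add: powr_mult powr_powr powr_add[symmetric])
  also have "\<dots> \<le> d powr r * S powr (\<sigma>/r - 1)"
    using weak dp k r by (intro mult_left_mono powr_mono2) (auto simp: field_simps)
  finally show ?thesis .
qed

lemma sum_powr_le_if_lorentz_sum_le:
  fixes d :: "nat \<Rightarrow> real"
  assumes r: "1 < r" "r < \<sigma>" and d: "\<forall>k\<in>{1..n}. 0 \<le> d k"
    and X: "(\<Sum>k=1..n. (d k * real k powr (1/r - 1/\<sigma>)) powr \<sigma>) \<le> 1"
  shows "(\<Sum>k=1..n. d k powr r) \<le> (\<Sum>k=1..n. 1 / real k) powr (r * (1/r - 1/\<sigma>))"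
proof -
  define b where "b = 1/r - 1/\<sigma>"
  define p where "p = \<sigma> / r"
  define q where "q = \<sigma> / (\<sigma> - r)"
  have pq: "p > 1" "q > 1" "1/p + 1/q = 1" using r by (auto simp: p_def q_def field_simps)
  have brq: "b * r * q = 1" and q1: "1/q = r * b"
    using r by (simp_all add: b_def q_def field_simps)
  have "(\<Sum>k=1..n. d k powr r) = (\<Sum>k=1..n. ((d k * real k powr b) powr r) * (real k powr (-(b*r))))"
    using d by (intro sum.cong) (simp_all add: powr_mult powr_powr mult.assoc powr_add[symmetric])
  also have "\<dots> \<le> (\<Sum>k=1..n. ((d k * real k powr b) powr r) powr p) powr (1/p)
                 * (\<Sum>k=1..n. (real k powr (-(b*r))) powr q) powr (1/q)"
    using pq d by (intro Holder_inequality_sum) auto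
  also have "(\<Sum>k=1..n. ((d k * real k powr b) powr r) powr p) = (\<Sum>k=1..n. (d k * real k powr b) powr \<sigma>)"
    using r by (simp add: powr_powr p_def)
  also have "(\<Sum>k=1..n. (real k powr (-(b*r))) powr q) = (\<Sum>k=1..n. 1 / real k)"
  proof (rule sum.cong)
    fix k assume "k \<in> {1..n}"
    have "(real k powr (-(b*r))) powr q = real k powr (-1)"
      using brq by (simp add: powr_powr)
    then show "(real k powr (-(b*r))) powr q = 1 / real k"
      using \<open>k \<in> {1..n}\<close> by (simp add: powr_minus_divide)
  qed simp
  also have "(\<Sum>k=1..n. (d k * real k powr b) powr \<sigma>) powr (1/p) * (\<Sum>k=1..n. 1 / real k) powr (1/q)
      \<le> 1 * (\<Sum>k=1..n. 1 / real k) powr (1/q)"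
    using X pq sum_nonneg[of "{1..n}" "\<lambda>k. (d k * real k powr b) powr \<sigma>"]
    unfolding b_def by (intro mult_right_mono powr_le1) auto
  finally show ?thesis using q1 by (simp add: b_def)
qed

definition l1_const :: "real \<Rightarrow> ereal \<Rightarrow> real" where
  "l1_const r s = (if s = \<infinity> then r / (r - 1) else
     (1 / (1 - (1/r - 1/real_of_ereal s) * (real_of_ereal s / (real_of_ereal s - 1))))
        powr ((real_of_ereal s - 1) / real_of_ereal s))"

lemma l1_const_pos:
  assumes "r > 1" "ereal r \<le> s"
  shows "l1_const r s > 0"
proof (cases rule: ereal_ge_real_cases[OF assms(2)])
  case 1 then show ?thesis using assms by (simp add: l1_const_def)
next
  case (2 \<sigma>)
  define c where "c = (1/r - 1/\<sigma>) * (\<sigma> / (\<sigma> - 1))"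
  have "c < 1"
    using 2 assms by (simp add: field_simps c_def)
  then have "(1 / (1 - c)) powr ((\<sigma> - 1) / \<sigma>) > 0" by simp
  then show ?thesis using 2 by (simp add: l1_const_def c_def)
qed

lemma sum_le_if_lorentz_sum_le:
  fixes d :: "nat \<Rightarrow> real"
  assumes r: "1 < r" "r \<le> \<sigma>" and d: "\<forall>k\<in>{1..n}. 0 \<le> d k"
    and X: "(\<Sum>k=1..n. (d k * real k powr (1/r - 1/\<sigma>)) powr \<sigma>) \<le> 1"
  shows "(\<Sum>k=1..n. d k) \<le> l1_const r (ereal \<sigma>) * real n powr (1 - 1/r)"
proof -
  define b where "b = 1/r - 1/\<sigma>"
  define q where "q = \<sigma> / (\<sigma> - 1)"
  define c where "c = b * q"
  have pq: "\<sigma> > 1" "q > 1" "1/\<sigma> + 1/q = 1" using r by (auto simp: q_def field_simps)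
  have b0: "b \<ge> 0" using r by (simp add: b_def field_simps)
  have c: "0 \<le> c" "c < 1" using r b0 by (auto simp: c_def b_def q_def field_simps)
  have ex: "(1 - c) / q = 1 - 1/r" using r by (simp add: c_def b_def q_def field_simps)
  have "(\<Sum>k=1..n. d k) = (\<Sum>k=1..n. (d k * real k powr b) * real k powr (-b))"
    by (intro sum.cong) (simp_all add: mult.assoc powr_add[symmetric])
  also have "\<dots> \<le> (\<Sum>k=1..n. (d k * real k powr b) powr \<sigma>) powr (1/\<sigma>)
                 * (\<Sum>k=1..n. (real k powr (-b)) powr q) powr (1/q)"
    using pq d by (intro Holder_inequality_sum) auto
  also have "(\<Sum>k=1..n. (real k powr (-b)) powr q) = (\<Sum>k=1..n. real k powr (-c))"
    by (simp add: powr_powr c_def)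
  also have "(\<Sum>k=1..n. (d k * real k powr b) powr \<sigma>) powr (1/\<sigma>) \<le> 1"
    using X pq sum_nonneg[of "{1..n}" "\<lambda>k. (d k * real k powr b) powr \<sigma>"]
    unfolding b_def by (intro powr_le1) auto
  also have "(\<Sum>k=1..n. real k powr (-c)) powr (1/q) \<le> (real n powr (1-c) / (1-c)) powr (1/q)"
    using sum_powr_neg_le[OF c] pq by (intro powr_mono2) (auto intro!: sum_nonneg)
  also have "(real n powr (1-c) / (1-c)) powr (1/q) = (1/(1-c)) powr (1/q) * real n powr (1 - 1/r)"
    using c ex by (simp add: powr_divide powr_powr)
  also have "(1/(1-c)) powr (1/q) = l1_const r (ereal \<sigma>)"
    by (simp add: l1_const_def c_def b_def q_def)
  finally show ?thesis by (simp add: mult_right_mono)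
qed

lemma in_lball_if_sum_powr_less:
  assumes r: "r > 1" and rs: "ereal r \<le> s" and z: "\<forall>k\<ge>n. z k = 0"
    and S1: "(\<Sum>i<n. cmod (z i) powr r) < 1"
  shows "z \<in> lball r s n"
proof -
  define S where "S = (\<Sum>i<n. cmod (z i) powr r)"
  have S0: "S \<ge> 0" by (simp add: S_def sum_nonneg)
  have weak: "decr_rearr n z k powr r * real k \<le> S" if "k \<in> {1..n}" for k
    using decr_rearr_powr_le[of k n r z] that r by (simp add: S_def mult.commute)
  have dn: "0 \<le> decr_rearr n z k" if "k \<in> {1..n}" for k
    using decr_rearr_nonneg that by simp
  have "lorentz_norm r s n z < 1"
  proof (cases rule: ereal_ge_real_cases[OF rs])
    case 1
    have "decr_rearr n z k * real k powr (1/r) < 1" if k: "k \<in> {1..n}" for k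
    proof -
      have "(decr_rearr n z k * real k powr (1/r)) powr r = decr_rearr n z k powr r * real k"
        using k r dn[OF k] by (simp add: powr_mult powr_powr)
      also have "\<dots> < 1" using weak[OF k] S1 by (simp add: S_def)
      finally show ?thesis using k r dn[OF k] by (simp add: powr_less_one_iff)
    qed
    then show ?thesis using 1 by (simp add: lorentz_norm_infinity)
  next
    case (2 \<sigma>)
    have \<sigma>: "\<sigma> > 1" "r \<le> \<sigma>" using 2 r by auto
    have "(\<Sum>k=1..n. (decr_rearr n z k * real k powr (1/r - 1/\<sigma>)) powr \<sigma>)
        \<le> (\<Sum>k=1..n. decr_rearr n z k powr r * S powr (\<sigma>/r - 1))"
      using weak dn r \<sigma> by (intro sum_mono powr_weight_le_if_weak_bound) auto
    also have "\<dots> = (\<Sum>k=1..n. decr_rearr n z k powr r) * S powr (\<sigma>/r - 1)"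
      by (simp only: sum_distrib_right)
    also have "\<dots> = S * S powr (\<sigma>/r - 1)"
      using sum_decr_rearr[of "\<lambda>x. x powr r" n z] by (simp only: S_def)
    also have "\<dots> \<le> S"
      using S0 S1 \<sigma> r by (intro mult_left_le powr_le1) (auto simp: field_simps S_def)
    also have "\<dots> < 1" using S1 by (simp add: S_def)
    finally show ?thesis
      using 2 \<sigma> by (simp add: lorentz_norm_ereal powr_less_one_iff sum_nonneg)
  qed
  then show ?thesis using z by (simp add: lball_def)
qed

lemma zero_in_lball:
  assumes "r > 1" "ereal r \<le> s"
  shows "(\<lambda>_. 0) \<in> lball r s n"
  by (rule in_lball_if_sum_powr_less[OF assms]) (use assms in auto)

lemma decr_rearr_bound_if_lball_infinity:
  assumes "z \<in> lball r \<infinity> n" "k \<in> {1..n}"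
  shows "decr_rearr n z k * real k powr (1/r) < 1"
proof -
  have "decr_rearr n z k * real k powr (1/r)
      \<le> Max (insert 0 ((\<lambda>k. decr_rearr n z k * real k powr (1/r)) ` {1..n}))"
    using assms(2) by (intro Max_ge) auto
  also have "\<dots> < 1" using assms(1) by (simp add: lball_def lorentz_norm_infinity)
  finally show ?thesis .
qed

lemma sum_bound_if_lball_ereal:
  assumes "z \<in> lball r (ereal \<sigma>) n" "\<sigma> > 0"
  shows "(\<Sum>k=1..n. (decr_rearr n z k * real k powr (1/r - 1/\<sigma>)) powr \<sigma>) < 1"
  using assms by (simp add: lball_def lorentz_norm_ereal powr_less_one_iff sum_nonneg)

lemma sum_powr_le_if_lball:
  assumes r: "r > 1" and rs: "ereal r \<le> s" and z: "z \<in> lball r s n" and n: "n \<ge> 1"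
  shows "(\<Sum>i<n. cmod (z i) powr r) \<le> (1 + ln (real n)) powr (r * (1/r - inv_s s))"
proof -
  have harm: "(\<Sum>k=1..n. 1 / real k) \<le> 1 + ln (real n)"
    by (rule sum_inverse_le_one_plus_ln[OF n])
  have eq: "(\<Sum>i<n. cmod (z i) powr r) = (\<Sum>k=1..n. decr_rearr n z k powr r)"
    by (rule sum_decr_rearr[symmetric])
  have dn: "\<forall>k\<in>{1..n}. 0 \<le> decr_rearr n z k"
    using decr_rearr_nonneg by simp
  show ?thesis
  proof (cases rule: ereal_ge_real_cases[OF rs])
    case 1
    have "decr_rearr n z k powr r \<le> 1 / real k" if k: "k \<in> {1..n}" for k
    proof -
      have "(decr_rearr n z k * real k powr (1/r)) powr r \<le> 1"
        using decr_rearr_bound_if_lball_infinity[of z r n k] z 1 k dn r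
        by (intro powr_le1) auto
      then show ?thesis
        using dn k r by (simp add: powr_mult powr_powr field_simps)
    qed
    then have "(\<Sum>k=1..n. decr_rearr n z k powr r) \<le> (\<Sum>k=1..n. 1 / real k)"
      by (rule sum_mono)
    then show ?thesis using eq harm 1 r n by simp
  next
    case (2 \<sigma>)
    have X: "(\<Sum>k=1..n. (decr_rearr n z k * real k powr (1/r - 1/\<sigma>)) powr \<sigma>) < 1"
      using sum_bound_if_lball_ereal[of z r \<sigma> n] z 2 r by simp
    show ?thesis
    proof (cases "\<sigma> = r")
      case True
      moreover have "0 \<le> ln (real n)" using n by simp
      then have "1 + ln (real n) \<noteq> 0" by linarith
      ultimately show ?thesis using X eq 2 by simp
    next
      case False
      then have "(\<Sum>k=1..n. decr_rearr n z k powr r) \<le> (\<Sum>k=1..n. 1 / real k) powr (r * (1/r - 1/\<sigma>))"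
        using 2 r X dn by (intro sum_powr_le_if_lorentz_sum_le) auto
      also have "\<dots> \<le> (1 + ln (real n)) powr (r * (1/r - 1/\<sigma>))"
        using harm lorentz_exponent_bounds(1)[OF r rs] 2 r
        by (intro powr_mono2 mult_nonneg_nonneg) (auto intro!: sum_nonneg)
      finally show ?thesis using eq 2 by simp
    qed
  qed
qed

lemma sum_norm_le_if_lball:
  assumes r: "r > 1" and rs: "ereal r \<le> s" and z: "z \<in> lball r s n"
  shows "(\<Sum>i<n. cmod (z i)) \<le> l1_const r s * real n powr (1 - 1/r)"
proof -
  have eq: "(\<Sum>i<n. cmod (z i)) = (\<Sum>k=1..n. decr_rearr n z k)"
    using sum_decr_rearr[of "\<lambda>x. x" n z] by simp
  have dn: "\<forall>k\<in>{1..n}. 0 \<le> decr_rearr n z k"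
    using decr_rearr_nonneg by simp
  show ?thesis
  proof (cases rule: ereal_ge_real_cases[OF rs])
    case 1
    have "decr_rearr n z k \<le> real k powr (-(1/r))" if k: "k \<in> {1..n}" for k
    proof -
      have "decr_rearr n z k * real k powr (1/r) < 1"
        using decr_rearr_bound_if_lball_infinity z 1 k by simp
      then show ?thesis using k by (simp add: powr_minus_divide field_simps)
    qed
    then have "(\<Sum>k=1..n. decr_rearr n z k) \<le> (\<Sum>k=1..n. real k powr (-(1/r)))"
      by (rule sum_mono)
    also have "\<dots> \<le> real n powr (1 - 1/r) / (1 - 1/r)"
      using r by (intro sum_powr_neg_le) auto
    also have "\<dots> = l1_const r s * real n powr (1 - 1/r)"
      using 1 r by (simp add: l1_const_def field_simps)
    finally show ?thesis using eq by simp
  next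
    case (2 \<sigma>)
    have "(\<Sum>k=1..n. (decr_rearr n z k * real k powr (1/r - 1/\<sigma>)) powr \<sigma>) < 1"
      using sum_bound_if_lball_ereal[of z r \<sigma> n] z 2 r by simp
    then show ?thesis
      using sum_le_if_lorentz_sum_le[of r \<sigma> n "decr_rearr n z"] eq 2 r dn by simp
  qed
qed

section \<open>Multi-indices and monomials\<close>

lemma deg_eq_sum:
  assumes "\<forall>j\<ge>n. \<alpha> j = 0"
  shows "deg \<alpha> = (\<Sum>j<n. \<alpha> j)"
  unfolding deg_def using assms by (intro sum.mono_neutral_left) (auto simp: not_less[symmetric])

lemma norm_monom: "cmod (monom n \<alpha> z) = (\<Prod>j<n. cmod (z j) ^ \<alpha> j)"
  by (simp add: monom_def prod_norm[symmetric] norm_power)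

definition multi_indices :: "nat \<Rightarrow> nat set \<Rightarrow> (nat \<Rightarrow> nat) set" where
  "multi_indices n A = {e. (\<forall>j\<ge>n. e j = 0) \<and> (\<forall>j<n. e j \<in> A)}"

lemma multi_indices_eq_image_PiE:
  "multi_indices n A = (\<lambda>g j. if j < n then g j else 0) ` PiE {..<n} (\<lambda>_. A)"
proof (intro equalityI subsetI)
  fix e assume e: "e \<in> multi_indices n A"
  then have "e = (\<lambda>g j. if j < n then g j else 0) (restrict e {..<n})"
    by (auto simp: multi_indices_def fun_eq_iff)
  moreover have "restrict e {..<n} \<in> PiE {..<n} (\<lambda>_. A)"
    using e by (auto simp: multi_indices_def)
  ultimately show "e \<in> (\<lambda>g j. if j < n then g j else 0) ` PiE {..<n} (\<lambda>_. A)" by blast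
next
  fix e assume "e \<in> (\<lambda>g j. if j < n then g j else 0) ` PiE {..<n} (\<lambda>_. A)"
  then obtain g where "g \<in> PiE {..<n} (\<lambda>_. A)" "e = (\<lambda>j. if j < n then g j else 0)"
    by blast
  then show "e \<in> multi_indices n A" by (simp add: multi_indices_def PiE_iff)
qed

lemma inj_on_extend_zero_PiE:
  "inj_on (\<lambda>g j. if j < n then g j else 0) (PiE {..<n} (\<lambda>_. A))"
proof (rule inj_onI)
  fix g g' assume g: "g \<in> PiE {..<n} (\<lambda>_. A)" "g' \<in> PiE {..<n} (\<lambda>_. A)"
    and eq: "(\<lambda>j. if j < n then g j else 0) = (\<lambda>j. if j < n then g' j else 0)"
  show "g = g'"
  proof (rule PiE_ext[OF g])
    fix j assume "j \<in> {..<n}"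
    then show "g j = g' j" using fun_cong[OF eq, of j] by simp
  qed
qed

lemma finite_multi_indices: "finite A \<Longrightarrow> finite (multi_indices n A)"
  by (simp add: multi_indices_eq_image_PiE finite_PiE)

lemma sum_prod_multi_indices:
  fixes h :: "nat \<Rightarrow> nat \<Rightarrow> 'c::comm_semiring_1"
  assumes "finite A"
  shows "(\<Sum>e\<in>multi_indices n A. \<Prod>j<n. h j (e j)) = (\<Prod>j<n. \<Sum>a\<in>A. h j a)"
proof -
  have "(\<Sum>e\<in>multi_indices n A. \<Prod>j<n. h j (e j)) = (\<Sum>g\<in>PiE {..<n} (\<lambda>_. A). \<Prod>j<n. h j (g j))"
    by (simp add: multi_indices_eq_image_PiE sum.reindex[OF inj_on_extend_zero_PiE])
  also have "\<dots> = (\<Prod>j<n. \<Sum>a\<in>A. h j a)"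
    using assms by (intro prod_sum_PiE[symmetric]) auto
  finally show ?thesis .
qed

lemma card_multi_indices: "card (multi_indices n {..<N}) = N ^ n"
  using sum_prod_multi_indices[of "{..<N}" "\<lambda>j a. (1::nat)" n] by simp

lemma mem_multi_indices_if_deg_le:
  assumes "\<forall>j\<ge>n. \<alpha> j = 0" "deg \<alpha> \<le> m"
  shows "\<alpha> \<in> multi_indices n {..m}"
proof -
  have "\<alpha> j \<le> m" if "j < n" for j
    using member_le_sum[of j "{..<n}" \<alpha>] that assms by (simp add: deg_eq_sum)
  then show ?thesis using assms by (auto simp: multi_indices_def)
qed

lemma norm_le_if_lball:
  assumes "r > 1" "ereal r \<le> s" "n \<ge> 1" "z \<in> lball r s n"
  shows "cmod (z j) \<le> max 1 ((1 + ln (real n)) powr (r * (1/r - inv_s s)))"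
proof (cases "j < n \<and> cmod (z j) > 1")
  case True
  then have "cmod (z j) powr 1 \<le> cmod (z j) powr r" using assms by (intro powr_mono) auto
  also have "\<dots> \<le> (\<Sum>i<n. cmod (z i) powr r)"
    using True by (intro member_le_sum) auto
  also have "\<dots> \<le> (1 + ln (real n)) powr (r * (1/r - inv_s s))"
    by (rule sum_powr_le_if_lball[OF assms(1,2,4,3)])
  finally show ?thesis using True by simp
next
  case False
  then show ?thesis using assms(4) by (auto simp: lball_def)
qed

lemma norm_monom_le_if_lball:
  assumes "r > 1" "ereal r \<le> s" "n \<ge> 1" "z \<in> lball r s n"
  shows "cmod (monom n \<alpha> z) \<le> max 1 ((1 + ln (real n)) powr (r * (1/r - inv_s s))) ^ (\<Sum>j<n. \<alpha> j)"
  unfolding norm_monom power_sum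
  using norm_le_if_lball[OF assms] by (intro prod_mono conjI power_mono) auto

lemma bdd_above_monom_lball:
  assumes "r > 1" "ereal r \<le> s" "n \<ge> 1"
  shows "bdd_above ((\<lambda>z. cmod (monom n \<alpha> z)) ` lball r s n)"
  using norm_monom_le_if_lball[OF assms] by (intro bdd_aboveI2) blast

lemma bdd_above_poly_eval_lball:
  assumes "r > 1" "ereal r \<le> s" "n \<ge> 1"
  shows "bdd_above ((\<lambda>z. cmod (poly_eval J n c z)) ` lball r s n)"
proof (rule bdd_aboveI2)
  define R where "R = max 1 ((1 + ln (real n)) powr (r * (1/r - inv_s s)))"
  fix z assume z: "z \<in> lball r s n"
  have "cmod (poly_eval J n c z) \<le> (\<Sum>\<beta>\<in>index_cut J n. cmod (c \<beta> * monom n \<beta> z))"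
    unfolding poly_eval_def by (rule norm_sum)
  also have "\<dots> \<le> (\<Sum>\<beta>\<in>index_cut J n. cmod (c \<beta>) * R ^ (\<Sum>j<n. \<beta> j))"
  proof (rule sum_mono)
    fix \<beta> assume "\<beta> \<in> index_cut J n"
    show "cmod (c \<beta> * monom n \<beta> z) \<le> cmod (c \<beta>) * R ^ (\<Sum>j<n. \<beta> j)"
      unfolding norm_mult R_def by (rule mult_left_mono[OF norm_monom_le_if_lball[OF assms z] norm_ge_zero])
  qed
  finally show "cmod (poly_eval J n c z) \<le> (\<Sum>\<beta>\<in>index_cut J n. cmod (c \<beta>) * R ^ (\<Sum>j<n. \<beta> j))" .
qed

section \<open>The test point of a multi-index\<close>

definition test_point :: "real \<Rightarrow> nat \<Rightarrow> (nat \<Rightarrow> nat) \<Rightarrow> nat \<Rightarrow> complex" where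
  "test_point r n \<alpha> j =
     (if j < n then of_real ((1/2) * (real (\<alpha> j) / real (deg \<alpha>)) powr (1/r)) else 0)"

definition test_weight :: "real \<Rightarrow> nat \<Rightarrow> (nat \<Rightarrow> nat) \<Rightarrow> real" where
  "test_weight r n \<alpha> = 1 / cmod (monom n \<alpha> (test_point r n \<alpha>))"

lemma norm_test_point:
  "j < n \<Longrightarrow> cmod (test_point r n \<alpha> j) = (1/2) * (real (\<alpha> j) / real (deg \<alpha>)) powr (1/r)"
  by (simp add: test_point_def)

lemma test_point_in_lball:
  assumes r: "r > 1" and rs: "ereal r \<le> s" and \<alpha>: "\<forall>j\<ge>n. \<alpha> j = 0"
  shows "test_point r n \<alpha> \<in> lball r s n"
proof (rule in_lball_if_sum_powr_less[OF r rs])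
  show "\<forall>k\<ge>n. test_point r n \<alpha> k = 0" by (simp add: test_point_def)
  have "(\<Sum>i<n. cmod (test_point r n \<alpha> i) powr r) = (\<Sum>i<n. (1/2) powr r * (real (\<alpha> i) / real (deg \<alpha>)))"
  proof (rule sum.cong)
    fix i assume "i \<in> {..<n}"
    have "((1/2) * (real (\<alpha> i) / real (deg \<alpha>)) powr (1/r)) powr r
        = (1/2) powr r * ((real (\<alpha> i) / real (deg \<alpha>)) powr (1/r)) powr r"
      by (rule powr_mult; simp)
    also have "((real (\<alpha> i) / real (deg \<alpha>)) powr (1/r)) powr r = real (\<alpha> i) / real (deg \<alpha>)"
      using r by (simp add: powr_powr)
    finally show "cmod (test_point r n \<alpha> i) powr r = (1/2) powr r * (real (\<alpha> i) / real (deg \<alpha>))"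
      using \<open>i \<in> {..<n}\<close> by (simp only: norm_test_point lessThan_iff)
  qed simp
  also have "\<dots> = (1/2) powr r * (real (\<Sum>i<n. \<alpha> i) / real (deg \<alpha>))"
    by (simp add: sum_distrib_left[symmetric] sum_divide_distrib[symmetric])
  also have "\<dots> \<le> (1/2) powr r"
    using deg_eq_sum[OF \<alpha>] by (cases "deg \<alpha> = 0") auto
  also have "\<dots> < 1" using r by (simp add: powr_less_one_iff)
  finally show "(\<Sum>i<n. cmod (test_point r n \<alpha> i) powr r) < 1" .
qed

lemma norm_monom_test_point:
  assumes "\<forall>j\<ge>n. \<alpha> j = 0"
  shows "cmod (monom n \<alpha> (test_point r n \<alpha>))
       = (1/2) ^ deg \<alpha> * (\<Prod>j<n. (real (\<alpha> j) / real (deg \<alpha>)) ^ \<alpha> j) powr (1/r)"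
proof -
  have "cmod (monom n \<alpha> (test_point r n \<alpha>))
      = (\<Prod>j<n. ((1/2) * (real (\<alpha> j) / real (deg \<alpha>)) powr (1/r)) ^ \<alpha> j)"
    by (simp add: norm_monom norm_test_point)
  also have "\<dots> = (\<Prod>j<n. (1/2) ^ \<alpha> j * ((real (\<alpha> j) / real (deg \<alpha>)) ^ \<alpha> j) powr (1/r))"
    by (intro prod.cong refl, subst power_mult_distrib) (simp add: powr_power_commute)
  also have "\<dots> = (1/2) ^ deg \<alpha> * (\<Prod>j<n. (real (\<alpha> j) / real (deg \<alpha>)) ^ \<alpha> j) powr (1/r)"
    by (simp add: prod.distrib power_sum deg_eq_sum[OF assms] prod_powr_distrib)
  finally show ?thesis .
qed

lemma fact_ratio_le_prod_power:
  assumes \<alpha>: "\<forall>j\<ge>n. \<alpha> j = 0"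
  shows "(\<Prod>j<n. fact (\<alpha> j)) / (exp (real (deg \<alpha>)) * fact (deg \<alpha>))
          \<le> (\<Prod>j<n. (real (\<alpha> j) / real (deg \<alpha>)) ^ \<alpha> j)"
proof (cases "deg \<alpha> = 0")
  case True
  then have "\<forall>j<n. \<alpha> j = 0" using deg_eq_sum[OF \<alpha>] by simp
  then show ?thesis using True by simp
next
  case False
  define k where "k = deg \<alpha>"
  have kp: "real k > 0" using False by (simp add: k_def)
  have "(\<Prod>j<n. real k ^ \<alpha> j) = real k ^ k"
    by (simp add: power_sum[symmetric] k_def deg_eq_sum[OF \<alpha>])
  then have e: "(\<Prod>j<n. (real (\<alpha> j) / real k) ^ \<alpha> j) = (\<Prod>j<n. real (\<alpha> j) ^ \<alpha> j) / real k ^ k"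
    by (simp add: power_divide prod_dividef)
  have "(\<Prod>j<n. fact (\<alpha> j)) \<le> (\<Prod>j<n. real (\<alpha> j) ^ \<alpha> j)"
    using fact_le_power by (intro prod_mono) (fastforce simp del: of_nat_power simp: of_nat_power[symmetric])
  then have "(\<Prod>j<n. fact (\<alpha> j)) / (exp (real k) * fact k) \<le> (\<Prod>j<n. real (\<alpha> j) ^ \<alpha> j) / (exp (real k) * fact k)"
    by (intro divide_right_mono) auto
  also have "\<dots> \<le> (\<Prod>j<n. real (\<alpha> j) ^ \<alpha> j) / real k ^ k"
    using power_le_exp_mult_fact[of "real k" k] kp by (intro divide_left_mono prod_nonneg) auto
  finally show ?thesis using e by (simp add: k_def)
qed

lemma norm_monom_test_point_ge:
  assumes "\<forall>j\<ge>n. \<alpha> j = 0" "r > 0"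
  shows "cmod (monom n \<alpha> (test_point r n \<alpha>))
       \<ge> (1/2) ^ deg \<alpha> * ((\<Prod>j<n. fact (\<alpha> j)) / (exp (real (deg \<alpha>)) * fact (deg \<alpha>))) powr (1/r)"
  unfolding norm_monom_test_point[OF assms(1)]
  using assms by (intro mult_left_mono powr_mono2 fact_ratio_le_prod_power) (auto intro!: divide_nonneg_nonneg prod_nonneg)

lemma norm_monom_test_point_pos:
  assumes "\<forall>j\<ge>n. \<alpha> j = 0" "r > 0"
  shows "cmod (monom n \<alpha> (test_point r n \<alpha>)) > 0"
proof -
  have "(\<Prod>j<n. fact (\<alpha> j)) / (exp (real (deg \<alpha>)) * fact (deg \<alpha>)) > (0::real)"
    by (intro divide_pos_pos prod_pos mult_pos_pos) auto
  then have "(1/2) ^ deg \<alpha> * ((\<Prod>j<n. fact (\<alpha> j)) / (exp (real (deg \<alpha>)) * fact (deg \<alpha>))) powr (1/r) > 0"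
    by simp
  then show ?thesis using norm_monom_test_point_ge[OF assms] by linarith
qed

lemma test_weight_le:
  assumes \<alpha>: "\<forall>j\<ge>n. \<alpha> j = 0" and r: "r > 0"
  shows "test_weight r n \<alpha>
       \<le> 2 ^ deg \<alpha> * (exp (real (deg \<alpha>)) * fact (deg \<alpha>) / (\<Prod>j<n. fact (\<alpha> j))) powr (1/r)"
proof -
  define Y :: real where "Y = (\<Prod>j<n. fact (\<alpha> j)) / (exp (real (deg \<alpha>)) * fact (deg \<alpha>))"
  have Y: "Y > 0" unfolding Y_def by (intro divide_pos_pos prod_pos mult_pos_pos) auto
  have "test_weight r n \<alpha> \<le> 1 / ((1/2) ^ deg \<alpha> * Y powr (1/r))"
    unfolding test_weight_def
  proof (rule divide_left_mono)
    show "(1/2) ^ deg \<alpha> * Y powr (1/r) \<le> cmod (monom n \<alpha> (test_point r n \<alpha>))"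
      using norm_monom_test_point_ge[OF \<alpha> r] by (simp add: Y_def)
    show "0 < cmod (monom n \<alpha> (test_point r n \<alpha>)) * ((1/2) ^ deg \<alpha> * Y powr (1/r))"
      using norm_monom_test_point_pos[OF \<alpha> r] Y by simp
  qed simp
  also have "\<dots> = 2 ^ deg \<alpha> * (1 / Y) powr (1/r)"
    using Y by (simp add: powr_divide power_one_over)
  finally show ?thesis by (simp add: Y_def)
qed

lemma c_coef_le_test_weight:
  assumes r: "r > 1" and rs: "ereal r \<le> s" and n: "n \<ge> 1" and \<alpha>: "\<forall>j\<ge>n. \<alpha> j = 0"
  shows "c_coef r s n \<alpha> \<le> test_weight r n \<alpha>"
proof -
  have pos: "cmod (monom n \<alpha> (test_point r n \<alpha>)) > 0"
    using norm_monom_test_point_pos[OF \<alpha>] r by simp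
  have le: "cmod (monom n \<alpha> (test_point r n \<alpha>)) \<le> (SUP z\<in>lball r s n. cmod (monom n \<alpha> z))"
    by (rule cSUP_upper[OF test_point_in_lball[OF r rs \<alpha>] bdd_above_monom_lball[OF r rs n]])
  have "(SUP z\<in>lball r s n. cmod (monom n \<alpha> z)) > 0" using pos le by linarith
  then show ?thesis
    unfolding c_coef_def test_weight_def by (intro divide_left_mono[OF le] mult_pos_pos pos) simp_all
qed

lemma half_le_powr:
  fixes L b :: real
  assumes "L \<ge> 1/2" "0 \<le> b" "b \<le> 1"
  shows "1/2 \<le> L powr b"
proof -
  have "(1/2::real) powr 1 \<le> (1/2) powr b" using assms by (intro powr_mono') auto
  also have "\<dots> \<le> L powr b" using assms by (intro powr_mono2) auto
  finally show ?thesis by simp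
qed

lemma power_le_two_power_mult_power:
  fixes y :: real
  assumes y: "y \<ge> 1/2" and k: "k \<le> m"
  shows "y ^ k \<le> 2 ^ m * y ^ m"
proof (cases "y \<ge> 1")
  case True
  then have "y ^ k \<le> y ^ m" by (intro power_increasing[OF k])
  also have "\<dots> \<le> 2 ^ m * y ^ m" using True by simp
  finally show ?thesis .
next
  case False
  then have "y ^ k \<le> 1" using y by (intro power_le_one) auto
  also have "1 = 2 ^ m * (1/2::real) ^ m" by (simp add: power_one_over)
  also have "\<dots> \<le> 2 ^ m * y ^ m" using y by (intro mult_left_mono power_mono) auto
  finally show ?thesis .
qed

lemma test_weight_le_deg:
  assumes r: "1 < r" and \<alpha>: "\<forall>j\<ge>n. \<alpha> j = 0" and dm: "deg \<alpha> \<le> m"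
  shows "test_weight r n \<alpha>
       \<le> (2 * exp 1 * real m powr (1/r)) ^ deg \<alpha> / (\<Prod>j<n. fact (\<alpha> j)) powr (1/r)"
proof -
  define k where "k = deg \<alpha>"
  have exp_le: "exp (real k) powr (1/r) \<le> exp 1 ^ k"
  proof -
    have "exp (real k) powr (1/r) \<le> exp (real k) powr 1" using r by (intro powr_mono) auto
    then show ?thesis by (simp add: exp_of_nat_mult[symmetric])
  qed
  have fact_le: "(fact k :: real) powr (1/r) \<le> (real m powr (1/r)) ^ k"
  proof -
    have "(fact k :: real) \<le> real k ^ k" using fact_le_power[of k] by simp
    also have "\<dots> \<le> real m ^ k" using dm by (intro power_mono) (auto simp: k_def)
    finally have "(fact k :: real) powr (1/r) \<le> (real m ^ k) powr (1/r)" using r by (intro powr_mono2) auto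
    then show ?thesis by (simp add: powr_power_commute)
  qed
  have "test_weight r n \<alpha> \<le> 2 ^ k * (exp (real k) * fact k / (\<Prod>j<n. fact (\<alpha> j))) powr (1/r)"
    using test_weight_le[OF \<alpha>] r by (simp add: k_def)
  also have "\<dots> = 2 ^ k * exp (real k) powr (1/r) * (fact k) powr (1/r) / (\<Prod>j<n. fact (\<alpha> j)) powr (1/r)"
    by (simp add: powr_divide powr_mult prod_nonneg)
  also have "\<dots> \<le> 2 ^ k * exp 1 ^ k * (real m powr (1/r)) ^ k / (\<Prod>j<n. fact (\<alpha> j)) powr (1/r)"
    using exp_le fact_le by (intro divide_right_mono mult_mono mult_left_mono) auto
  finally show ?thesis by (simp add: k_def power_mult_distrib)
qed

lemma test_weight_mult_norm_monom_le:
  fixes z :: "nat \<Rightarrow> complex" and L t b :: real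
  assumes r: "1 < r" and \<alpha>: "\<forall>j\<ge>n. \<alpha> j = 0" and dm: "deg \<alpha> \<le> m" and m: "m \<ge> 1"
    and L: "L \<ge> 1/2" and b: "0 \<le> b" "b \<le> 1" and t: "t = real m powr (1/r) / L powr b"
  shows "test_weight r n \<alpha> * cmod (monom n \<alpha> z)
     \<le> (4 * exp 1) ^ m * (L powr b) ^ m * (\<Prod>j<n. (t * cmod (z j)) ^ \<alpha> j / (fact (\<alpha> j)) powr (1/r))"
proof -
  define k where "k = deg \<alpha>"
  have km: "k \<le> m" using dm by (simp add: k_def)
  have Lb: "L powr b > 0" using L by simp
  define P :: real where "P = (\<Prod>j<n. cmod (z j) ^ \<alpha> j / (fact (\<alpha> j)) powr (1/r))"
  have P0: "P \<ge> 0" unfolding P_def by (intro prod_nonneg) auto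
  have "(\<Prod>j<n. (t * cmod (z j)) ^ \<alpha> j / (fact (\<alpha> j)) powr (1/r))
      = (\<Prod>j<n. t ^ \<alpha> j * (cmod (z j) ^ \<alpha> j / (fact (\<alpha> j)) powr (1/r)))"
    by (intro prod.cong refl) (simp add: power_mult_distrib)
  also have "\<dots> = t ^ k * P"
    using deg_eq_sum[OF \<alpha>] by (simp only: prod.distrib power_sum P_def k_def)
  finally have Q: "(\<Prod>j<n. (t * cmod (z j)) ^ \<alpha> j / (fact (\<alpha> j)) powr (1/r)) = t ^ k * P" .
  have "test_weight r n \<alpha> * cmod (monom n \<alpha> z)
      \<le> (2 * exp 1 * real m powr (1/r)) ^ k / (\<Prod>j<n. fact (\<alpha> j)) powr (1/r) * cmod (monom n \<alpha> z)"
    using test_weight_le_deg[OF r \<alpha> dm] by (intro mult_right_mono) (auto simp: k_def)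
  also have "\<dots> = (2 * exp 1) ^ k * (L powr b) ^ k * (t ^ k * P)"
    using t Lb by (simp add: P_def norm_monom prod_powr_distrib prod_dividef power_mult_distrib
        power_divide)
  also have "\<dots> \<le> (2 * exp 1) ^ m * (2 ^ m * (L powr b) ^ m) * (t ^ k * P)"
  proof (intro mult_right_mono mult_mono)
    show "(2 * exp 1) ^ k \<le> (2 * exp 1 :: real) ^ m"
      by (rule power_increasing[OF km]) (use exp_ge_add_one_self[of "1::real"] in linarith)
    show "(L powr b) ^ k \<le> 2 ^ m * (L powr b) ^ m"
      using power_le_two_power_mult_power[OF half_le_powr[OF L b] km] .
  qed (use P0 t Lb in auto)
  also have "\<dots> = (4 * exp 1) ^ m * (L powr b) ^ m * (t ^ k * P)"
    by (simp add: power_mult_distrib flip: power_mult_distrib[of 2 2])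
  finally show ?thesis using Q by simp
qed

lemma sum_multi_indices_le_exp:
  fixes u :: "nat \<Rightarrow> real"
  assumes r: "1 < r" "r \<le> 2" and u: "\<And>j. 0 \<le> u j" and I: "I \<subseteq> multi_indices n {..m}"
  shows "(\<Sum>\<alpha>\<in>I. \<Prod>j<n. u j ^ \<alpha> j / (fact (\<alpha> j)) powr (1/r))
       \<le> exp (5 * ((\<Sum>j<n. u j) + (\<Sum>j<n. u j powr r)))"
proof -
  have "(\<Sum>\<alpha>\<in>I. \<Prod>j<n. u j ^ \<alpha> j / (fact (\<alpha> j)) powr (1/r))
      \<le> (\<Sum>\<alpha>\<in>multi_indices n {..m}. \<Prod>j<n. u j ^ \<alpha> j / (fact (\<alpha> j)) powr (1/r))"
    using I u by (intro sum_mono2 finite_multi_indices prod_nonneg) auto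
  also have "\<dots> = (\<Prod>j<n. \<Sum>a\<le>m. u j ^ a / (fact a) powr (1/r))"
    by (rule sum_prod_multi_indices) simp
  also have "\<dots> \<le> (\<Prod>j<n. exp (5 * (u j + u j powr r)))"
    using sum_power_div_fact_powr_le_exp[OF r u] u by (intro prod_mono conjI sum_nonneg) auto
  also have "\<dots> = exp (5 * ((\<Sum>j<n. u j) + (\<Sum>j<n. u j powr r)))"
    by (simp add: exp_sum[symmetric] sum_distrib_left sum.distrib)
  finally show ?thesis .
qed

lemma scale_mult_n_powr_le:
  fixes L b :: real
  assumes r: "r > 1" and L: "L > 0" and m: "m \<ge> 1"
    and n: "real n \<le> exp 1 * L powr (conj_exp r * b) * real m"
  shows "real m powr (1/r) / L powr b * real n powr (1 - 1/r) \<le> exp 1 * real m"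
proof -
  have "conj_exp r * b * (1 - 1/r) = b"
    using r by (simp add: conj_exp_def field_simps)
  then have "(L powr (conj_exp r * b)) powr (1-1/r) = L powr b"
    by (simp only: powr_powr)
  then have "real n powr (1 - 1/r) \<le> exp 1 powr (1 - 1/r) * L powr b * real m powr (1 - 1/r)"
    using powr_mono2[OF _ _ n, of "1 - 1/r"] r by (simp add: powr_mult)
  then have "real m powr (1/r) / L powr b * real n powr (1 - 1/r)
      \<le> real m powr (1/r) / L powr b * (exp 1 powr (1 - 1/r) * L powr b * real m powr (1 - 1/r))"
    by (intro mult_left_mono) auto
  also have "\<dots> = exp 1 powr (1 - 1/r) * (real m powr (1/r) * real m powr (1 - 1/r))"
    using L by simp
  also have "real m powr (1/r) * real m powr (1 - 1/r) = real m"
    using m by (simp add: powr_add[symmetric])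
  also have "exp 1 powr (1 - 1/r) * real m \<le> exp 1 * real m"
    using powr_mono[of "1 - 1/r" 1 "exp 1"] r by (intro mult_right_mono) auto
  finally show ?thesis .
qed

lemma scale_powr_mult_le:
  fixes L b :: real
  assumes r: "r > 1" and b: "0 \<le> b" "r * b \<le> 1" and L: "L \<ge> 1/2"
  shows "(real m powr (1/r) / L powr b) powr r * (1 + L) powr (r * b) \<le> 3 * real m"
proof -
  have Lp: "L > 0" using L by simp
  have "(real m powr (1/r) / L powr b) powr r * (1 + L) powr (r * b) = real m * ((1 + L) / L) powr (r * b)"
    using r Lp by (simp add: powr_divide powr_powr mult.commute)
  also have "((1 + L) / L) powr (r * b) \<le> ((1 + L) / L) powr 1"
    using Lp b r by (intro powr_mono) (auto simp: field_simps)
  also have "((1 + L) / L) powr 1 \<le> 3" using L Lp by (simp add: field_simps)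
  finally show ?thesis by (simp add: mult_left_mono)
qed

lemma scaled_sum_norm_le_if_lball:
  assumes r: "1 < r" and rs: "ereal r \<le> s" and n: "n \<ge> 2" and m: "m \<ge> 1"
    and z: "z \<in> lball r s n"
    and hyp: "real n \<le> exp 1 * ln (real n) powr (conj_exp r * (1/r - inv_s s)) * real m"
  shows "real m powr (1/r) / ln (real n) powr (1/r - inv_s s) * (\<Sum>j<n. cmod (z j))
       \<le> l1_const r s * exp 1 * real m"
proof -
  define t where "t = real m powr (1/r) / ln (real n) powr (1/r - inv_s s)"
  have "t * (\<Sum>j<n. cmod (z j)) \<le> t * (l1_const r s * real n powr (1 - 1/r))"
    using sum_norm_le_if_lball[OF r rs z] by (intro mult_left_mono) (auto simp: t_def)
  also have "\<dots> = l1_const r s * (t * real n powr (1 - 1/r))" by simp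
  also have "\<dots> \<le> l1_const r s * (exp 1 * real m)"
    using scale_mult_n_powr_le[OF r _ m hyp] l1_const_pos[OF r rs] n
    unfolding t_def by (intro mult_left_mono) simp_all
  finally show ?thesis by (simp add: t_def)
qed

lemma scaled_sum_powr_le_if_lball:
  assumes r: "1 < r" and rs: "ereal r \<le> s" and n: "n \<ge> 2" and z: "z \<in> lball r s n"
  shows "(real m powr (1/r) / ln (real n) powr (1/r - inv_s s)) powr r * (\<Sum>j<n. cmod (z j) powr r)
       \<le> 3 * real m"
proof -
  have "(\<Sum>j<n. cmod (z j) powr r) \<le> (1 + ln (real n)) powr (r * (1/r - inv_s s))"
    using sum_powr_le_if_lball[OF r rs z] n by simp
  then have "(real m powr (1/r) / ln (real n) powr (1/r - inv_s s)) powr r * (\<Sum>j<n. cmod (z j) powr r)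
      \<le> (real m powr (1/r) / ln (real n) powr (1/r - inv_s s)) powr r * (1 + ln (real n)) powr (r * (1/r - inv_s s))"
    by (intro mult_left_mono) auto
  also have "\<dots> \<le> 3 * real m"
    using scale_powr_mult_le[OF r lorentz_exponent_bounds(1,2)[OF r rs] ln_ge_half[OF n]] .
  finally show ?thesis .
qed

definition main_const :: "real \<Rightarrow> ereal \<Rightarrow> real" where
  "main_const r s = 4 * exp 1 * exp (5 * (l1_const r s * exp 1 + 3))"

lemma sum_test_weight_mult_norm_monom_le:
  fixes z :: "nat \<Rightarrow> complex"
  assumes r: "1 < r" "r \<le> 2" and rs: "ereal r \<le> s" and n: "n \<ge> 2" and m: "m \<ge> 1"
    and z: "z \<in> lball r s n"
    and hyp: "real n \<le> exp 1 * ln (real n) powr (conj_exp r * (1/r - inv_s s)) * real m"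
    and I: "I \<subseteq> {\<alpha>. (\<forall>j\<ge>n. \<alpha> j = 0) \<and> deg \<alpha> \<le> m}"
  shows "(\<Sum>\<alpha>\<in>I. test_weight r n \<alpha> * cmod (monom n \<alpha> z))
       \<le> main_const r s ^ m * (ln (real n) powr (1/r - inv_s s)) ^ m"
proof -
  define b where "b = 1/r - inv_s s"
  define L where "L = ln (real n)"
  define t where "t = real m powr (1/r) / L powr b"
  define K where "K = (4 * exp 1) ^ m * (L powr b) ^ m"
  have L: "L \<ge> 1/2" using ln_ge_half[OF n] by (simp add: L_def)
  have bp: "0 \<le> b" "b \<le> 1"
    using lorentz_exponent_bounds[OF r(1) rs] by (simp_all add: b_def)
  have t0: "t \<ge> 0" by (simp add: t_def)
  have "(\<Sum>\<alpha>\<in>I. test_weight r n \<alpha> * cmod (monom n \<alpha> z))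
      \<le> (\<Sum>\<alpha>\<in>I. K * (\<Prod>j<n. (t * cmod (z j)) ^ \<alpha> j / (fact (\<alpha> j)) powr (1/r)))"
    using test_weight_mult_norm_monom_le[OF r(1) _ _ m L bp t_def] I
    by (intro sum_mono) (auto simp: K_def)
  also have "\<dots> = K * (\<Sum>\<alpha>\<in>I. \<Prod>j<n. (t * cmod (z j)) ^ \<alpha> j / (fact (\<alpha> j)) powr (1/r))"
    by (simp add: sum_distrib_left)
  also have "\<dots> \<le> K * exp (5 * ((\<Sum>j<n. t * cmod (z j)) + (\<Sum>j<n. (t * cmod (z j)) powr r)))"
    using I t0 mem_multi_indices_if_deg_le
    by (intro mult_left_mono sum_multi_indices_le_exp[OF r, where m=m]) (auto simp: K_def)
  also have "(\<Sum>j<n. t * cmod (z j)) \<le> l1_const r s * exp 1 * real m"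
    using scaled_sum_norm_le_if_lball[OF r(1) rs n m z hyp]
    by (simp add: t_def L_def b_def sum_distrib_left)
  also have "(\<Sum>j<n. (t * cmod (z j)) powr r) = t powr r * (\<Sum>j<n. cmod (z j) powr r)"
    using t0 by (simp add: powr_mult sum_distrib_left)
  also have "\<dots> \<le> 3 * real m"
    using scaled_sum_powr_le_if_lball[OF r(1) rs n z, of m] by (simp add: t_def L_def b_def)
  also have "K * exp (5 * (l1_const r s * exp 1 * real m + 3 * real m))
      = main_const r s ^ m * (ln (real n) powr (1/r - inv_s s)) ^ m"
    by (simp add: K_def main_const_def power_mult_distrib L_def b_def
        exp_of_nat_mult[symmetric] algebra_simps)
  finally show ?thesis by (simp add: K_def mult_left_mono)
qed

section \<open>Extracting coefficients by averaging over a torus\<close>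

definition prim_root :: "nat \<Rightarrow> complex" where
  "prim_root N = exp (2 * complex_of_real pi * \<i> / of_nat N)"

lemma norm_prim_root [simp]: "cmod (prim_root N) = 1"
  by (simp add: prim_root_def norm_exp_eq_Re)

lemma prim_root_power_eq_1_iff:
  assumes "N \<ge> 1"
  shows "prim_root N ^ d = 1 \<longleftrightarrow> N dvd d"
proof -
  have "prim_root N ^ d = exp (2 * complex_of_real pi * \<i> * of_nat d / of_nat N)"
    by (simp add: prim_root_def exp_of_nat_mult[symmetric] mult_ac)
  then show ?thesis using complex_root_unity_eq_1[OF assms] by simp
qed

lemma sum_prim_root_power:
  assumes N: "N \<ge> 1"
  shows "(\<Sum>a<N. (prim_root N ^ d) ^ a) = (if N dvd d then of_nat N else 0)"
proof (cases "N dvd d")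
  case True
  then have "prim_root N ^ d = 1" using prim_root_power_eq_1_iff[OF N] by simp
  then show ?thesis using True by simp
next
  case False
  have "(prim_root N ^ d) ^ N = (prim_root N ^ N) ^ d"
    by (simp add: power_mult[symmetric] mult.commute)
  also have "prim_root N ^ N = 1" using prim_root_power_eq_1_iff[OF N] by simp
  finally show ?thesis
    using False prim_root_power_eq_1_iff[OF N, of d] by (simp add: sum_gp_strict)
qed

lemma dvd_add_diff_iff_eq:
  fixes a b N :: nat
  assumes "a < N" "b < N"
  shows "N dvd (b + (N - a)) \<longleftrightarrow> b = a"
proof
  assume "N dvd (b + (N - a))"
  then obtain q where q: "b + (N - a) = N * q" by (auto simp: dvd_def)
  have "N * q < N * 2" using q assms by linarith
  then have "q < 2" by simp
  moreover have "q \<noteq> 0" using q assms by (intro notI) simp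
  ultimately have "q = 1" by simp
  then show "b = a" using q assms by simp
qed (use assms in simp)

definition torus_point :: "real \<Rightarrow> nat \<Rightarrow> nat \<Rightarrow> (nat \<Rightarrow> nat) \<Rightarrow> (nat \<Rightarrow> nat) \<Rightarrow> nat \<Rightarrow> complex" where
  "torus_point r N n \<alpha> e j = test_point r n \<alpha> j * prim_root N ^ e j"

definition coeff_functional ::
    "real \<Rightarrow> nat \<Rightarrow> nat \<Rightarrow> (nat \<Rightarrow> nat) \<Rightarrow> ((nat \<Rightarrow> complex) \<Rightarrow> complex) \<Rightarrow> complex" where
  "coeff_functional r N n \<alpha> f =
     (\<Sum>e\<in>multi_indices n {..<N}. f (torus_point r N n \<alpha> e) * (\<Prod>j<n. prim_root N ^ ((N - \<alpha> j) * e j)))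
       / (of_nat N ^ n * monom n \<alpha> (test_point r n \<alpha>))"

lemma torus_point_in_lball:
  assumes "r > 1" "ereal r \<le> s" "\<forall>j\<ge>n. \<alpha> j = 0"
  shows "torus_point r N n \<alpha> e \<in> lball r s n"
proof -
  have "lorentz_norm r s n (torus_point r N n \<alpha> e) = lorentz_norm r s n (test_point r n \<alpha>)"
    by (rule lorentz_norm_cong) (simp add: torus_point_def norm_mult norm_power)
  then show ?thesis
    using test_point_in_lball[OF assms] by (simp add: lball_def torus_point_def test_point_def)
qed

lemma monom_torus_point:
  "monom n \<beta> (torus_point r N n \<alpha> e) = monom n \<beta> (test_point r n \<alpha>) * (\<Prod>j<n. prim_root N ^ (\<beta> j * e j))"
  by (simp add: monom_def torus_point_def power_mult_distrib prod.distrib power_mult[symmetric] mult.commute)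

lemma norm_coeff_functional_le:
  assumes r: "r > 1" and rs: "ereal r \<le> s" and \<alpha>: "\<forall>j\<ge>n. \<alpha> j = 0" and N: "N \<ge> 1"
    and bdd: "bdd_above ((\<lambda>z. cmod (f z)) ` lball r s n)"
  shows "cmod (coeff_functional r N n \<alpha> f) \<le> test_weight r n \<alpha> * sup_norm r s n f"
proof -
  define S where "S = sup_norm r s n f"
  have fS: "cmod (f (torus_point r N n \<alpha> e)) \<le> S" for e
    unfolding S_def sup_norm_def by (rule cSUP_upper[OF torus_point_in_lball[OF r rs \<alpha>] bdd])
  have mpos: "cmod (monom n \<alpha> (test_point r n \<alpha>)) > 0"
    using norm_monom_test_point_pos[OF \<alpha>] r by simp
  have "cmod (\<Sum>e\<in>multi_indices n {..<N}. f (torus_point r N n \<alpha> e) * (\<Prod>j<n. prim_root N ^ ((N - \<alpha> j) * e j)))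
      \<le> (\<Sum>e\<in>multi_indices n {..<N}. cmod (f (torus_point r N n \<alpha> e)))"
    by (rule order_trans[OF norm_sum]) (simp add: norm_mult prod_norm[symmetric] norm_power)
  also have "\<dots> \<le> (\<Sum>e\<in>multi_indices n {..<N}. S)" by (intro sum_mono fS)
  also have "\<dots> = real N ^ n * S" by (simp add: card_multi_indices)
  finally have A: "cmod (\<Sum>e\<in>multi_indices n {..<N}. f (torus_point r N n \<alpha> e) * (\<Prod>j<n. prim_root N ^ ((N - \<alpha> j) * e j)))
      \<le> real N ^ n * S" .
  have "cmod (coeff_functional r N n \<alpha> f)
      \<le> real N ^ n * S / (real N ^ n * cmod (monom n \<alpha> (test_point r n \<alpha>)))"
    unfolding coeff_functional_def norm_divide norm_mult norm_power norm_of_nat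
    using A mpos N by (intro divide_right_mono) auto
  also have "\<dots> = test_weight r n \<alpha> * S" using N by (simp add: test_weight_def)
  finally show ?thesis by (simp add: S_def)
qed

lemma coeff_functional_linear:
  "coeff_functional r N n \<alpha> (\<lambda>w. a * f w + b * g w)
     = a * coeff_functional r N n \<alpha> f + b * coeff_functional r N n \<alpha> g"
  by (simp add: coeff_functional_def ring_distribs sum.distrib sum_distrib_left add_divide_distrib mult.assoc)

lemma sum_torus_characters:
  assumes N: "N \<ge> 1" and \<alpha>: "\<alpha> \<in> multi_indices n {..<N}" and \<beta>: "\<beta> \<in> multi_indices n {..<N}"
  shows "(\<Sum>e\<in>multi_indices n {..<N}.
            (\<Prod>j<n. prim_root N ^ (\<beta> j * e j)) * (\<Prod>j<n. prim_root N ^ ((N - \<alpha> j) * e j)))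
       = (if \<beta> = \<alpha> then of_nat N ^ n else 0)"
proof -
  have "(\<Sum>e\<in>multi_indices n {..<N}.
           (\<Prod>j<n. prim_root N ^ (\<beta> j * e j)) * (\<Prod>j<n. prim_root N ^ ((N - \<alpha> j) * e j)))
      = (\<Sum>e\<in>multi_indices n {..<N}. \<Prod>j<n. (prim_root N ^ (\<beta> j + (N - \<alpha> j))) ^ e j)"
    by (intro sum.cong refl) (simp add: prod.distrib[symmetric] power_mult_distrib power_mult power_add)
  also have "\<dots> = (\<Prod>j<n. \<Sum>a<N. (prim_root N ^ (\<beta> j + (N - \<alpha> j))) ^ a)"
    by (rule sum_prod_multi_indices) simp
  also have "\<dots> = (\<Prod>j<n. if \<beta> j = \<alpha> j then of_nat N else 0)"
  proof (rule prod.cong[OF refl])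
    fix j assume "j \<in> {..<n}"
    then have "\<alpha> j < N" "\<beta> j < N" using \<alpha> \<beta> by (auto simp: multi_indices_def)
    then show "(\<Sum>a<N. (prim_root N ^ (\<beta> j + (N - \<alpha> j))) ^ a) = (if \<beta> j = \<alpha> j then of_nat N else 0)"
      using sum_prim_root_power[OF N] dvd_add_diff_iff_eq by simp
  qed
  also have "\<dots> = (if \<beta> = \<alpha> then of_nat N ^ n else 0)"
  proof (cases "\<beta> = \<alpha>")
    case False
    then obtain j where j: "\<beta> j \<noteq> \<alpha> j" by auto
    moreover have "\<forall>j\<ge>n. \<alpha> j = 0" "\<forall>j\<ge>n. \<beta> j = 0"
      using \<alpha> \<beta> by (simp_all add: multi_indices_def)
    ultimately have "j < n" by (metis not_less)
    then have "(\<Prod>j<n. if \<beta> j = \<alpha> j then (of_nat N :: complex) else 0) = 0"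
      using j by (intro prod_zero) auto
    then show ?thesis using False by simp
  qed simp
  finally show ?thesis .
qed

lemma coeff_functional_poly_eval:
  assumes r: "r > 0" and N: "N \<ge> 1" and IB: "index_cut J n \<subseteq> multi_indices n {..<N}"
    and \<alpha>: "\<alpha> \<in> index_cut J n"
  shows "coeff_functional r N n \<alpha> (poly_eval J n c) = c \<alpha>"
proof -
  define I where "I = index_cut J n"
  define w where "w = test_point r n \<alpha>"
  have fI: "finite I"
    unfolding I_def using IB finite_multi_indices[of "{..<N}" n] by (auto intro: finite_subset)
  have Mp: "monom n \<alpha> w \<noteq> 0"
    using norm_monom_test_point_pos[of n \<alpha> r] \<alpha> r by (auto simp: w_def index_cut_def)
  have "(\<Sum>e\<in>multi_indices n {..<N}. poly_eval J n c (torus_point r N n \<alpha> e) * (\<Prod>j<n. prim_root N ^ ((N - \<alpha> j) * e j)))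
      = (\<Sum>\<beta>\<in>I. c \<beta> * monom n \<beta> w * (\<Sum>e\<in>multi_indices n {..<N}.
            (\<Prod>j<n. prim_root N ^ (\<beta> j * e j)) * (\<Prod>j<n. prim_root N ^ ((N - \<alpha> j) * e j))))"
    by (simp add: poly_eval_def I_def monom_torus_point w_def sum_distrib_right sum_distrib_left mult.assoc
        sum.swap[of _ "multi_indices n {..<N}"])
  also have "\<dots> = (\<Sum>\<beta>\<in>I. if \<beta> = \<alpha> then c \<beta> * monom n \<beta> w * of_nat N ^ n else 0)"
  proof (rule sum.cong[OF refl])
    fix \<beta> assume "\<beta> \<in> I"
    then have "\<beta> \<in> multi_indices n {..<N}" "\<alpha> \<in> multi_indices n {..<N}"
      using IB \<alpha> by (auto simp: I_def)
    then show "c \<beta> * monom n \<beta> w * (\<Sum>e\<in>multi_indices n {..<N}.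
          (\<Prod>j<n. prim_root N ^ (\<beta> j * e j)) * (\<Prod>j<n. prim_root N ^ ((N - \<alpha> j) * e j)))
        = (if \<beta> = \<alpha> then c \<beta> * monom n \<beta> w * of_nat N ^ n else 0)"
      by (simp add: sum_torus_characters[OF N])
  qed
  also have "\<dots> = c \<alpha> * monom n \<alpha> w * of_nat N ^ n"
    using \<alpha> fI by (simp add: I_def)
  finally show ?thesis using Mp N by (simp add: coeff_functional_def w_def)
qed

lemma sup_norm_nonneg:
  assumes "r > 1" "ereal r \<le> s" "bdd_above ((\<lambda>z. cmod (f z)) ` lball r s n)"
  shows "sup_norm r s n f \<ge> 0"
  unfolding sup_norm_def
  using cSUP_upper[OF zero_in_lball[OF assms(1,2)] assms(3)] norm_ge_zero order_trans by blast

lemma sup_norm_poly_eval_le: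
  assumes r: "r > 1" and rs: "ereal r \<le> s"
    and M: "\<forall>z\<in>lball r s n. (\<Sum>\<alpha>\<in>index_cut J n. test_weight r n \<alpha> * cmod (monom n \<alpha> z)) \<le> K"
    and coeff: "\<forall>\<alpha>\<in>index_cut J n. cmod (d \<alpha>) \<le> test_weight r n \<alpha> * S" and S: "S \<ge> 0"
  shows "sup_norm r s n (poly_eval J n d) \<le> K * S"
  unfolding sup_norm_def
proof (rule cSUP_least)
  show "lball r s n \<noteq> {}" using zero_in_lball[OF r rs] by blast
  fix z assume z: "z \<in> lball r s n"
  have "cmod (poly_eval J n d z) \<le> (\<Sum>\<alpha>\<in>index_cut J n. cmod (d \<alpha> * monom n \<alpha> z))"
    unfolding poly_eval_def by (rule norm_sum)
  also have "\<dots> \<le> (\<Sum>\<alpha>\<in>index_cut J n. test_weight r n \<alpha> * S * cmod (monom n \<alpha> z))"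
    using coeff by (intro sum_mono) (auto simp: norm_mult intro: mult_right_mono)
  also have "\<dots> = S * (\<Sum>\<alpha>\<in>index_cut J n. test_weight r n \<alpha> * cmod (monom n \<alpha> z))"
    by (simp add: sum_distrib_left mult_ac)
  also have "\<dots> \<le> S * K" using M z S by (intro mult_left_mono) auto
  finally show "cmod (poly_eval J n d z) \<le> K * S" by (simp add: mult.commute)
qed

lemma Inf_nonneg_le:
  fixes K :: real
  assumes "K \<ge> 0" "P K"
  shows "Inf {K. K \<ge> 0 \<and> P K} \<le> K"
  using assms by (intro cInf_lower bdd_belowI[of _ 0]) auto

lemma hat_lambda_le:
  assumes r: "r > 1" and rs: "ereal r \<le> s" and n: "n \<ge> 1"
    and M: "\<forall>z\<in>lball r s n. (\<Sum>\<alpha>\<in>index_cut J n. test_weight r n \<alpha> * cmod (monom n \<alpha> z)) \<le> K"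
  shows "hat_lambda r s J n \<le> K"
  unfolding hat_lambda_def
proof (rule cSUP_least)
  show "lball r s n \<noteq> {}" using zero_in_lball[OF r rs] by blast
  fix z assume z: "z \<in> lball r s n"
  have "(\<Sum>\<alpha>\<in>index_cut J n. c_coef r s n \<alpha> * cmod (monom n \<alpha> z))
      \<le> (\<Sum>\<alpha>\<in>index_cut J n. test_weight r n \<alpha> * cmod (monom n \<alpha> z))"
    using c_coef_le_test_weight[OF r rs n]
    by (intro sum_mono mult_right_mono) (auto simp: index_cut_def)
  also have "\<dots> \<le> K" using M z by blast
  finally show "(\<Sum>\<alpha>\<in>index_cut J n. c_coef r s n \<alpha> * cmod (monom n \<alpha> z)) \<le> K" .
qed

lemma nonneg_if_test_weight_sum_le:
  assumes "r > 1" "ereal r \<le> s"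
    and M: "\<forall>z\<in>lball r s n. (\<Sum>\<alpha>\<in>index_cut J n. test_weight r n \<alpha> * cmod (monom n \<alpha> z)) \<le> K"
  shows "K \<ge> 0"
proof -
  have "0 \<le> (\<Sum>\<alpha>\<in>index_cut J n. test_weight r n \<alpha> * cmod (monom n \<alpha> (\<lambda>_. 0)))"
    by (intro sum_nonneg mult_nonneg_nonneg) (simp_all add: test_weight_def)
  also have "\<dots> \<le> K" using M zero_in_lball[OF assms(1,2)] by blast
  finally show ?thesis .
qed

lemma chi_mon_le:
  assumes r: "r > 1" and rs: "ereal r \<le> s" and n: "n \<ge> 1" and N: "N \<ge> 1"
    and IB: "index_cut J n \<subseteq> multi_indices n {..<N}"
    and M: "\<forall>z\<in>lball r s n. (\<Sum>\<alpha>\<in>index_cut J n. test_weight r n \<alpha> * cmod (monom n \<alpha> z)) \<le> K"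
  shows "chi_mon r s J n \<le> K"
  unfolding chi_mon_def
proof (rule Inf_nonneg_le)
  show "K \<ge> 0" by (rule nonneg_if_test_weight_sum_le[OF r rs M])
  show "\<forall>c \<theta>. (\<forall>\<alpha>. cmod (\<theta> \<alpha>) = 1) \<longrightarrow>
      sup_norm r s n (poly_eval J n (\<lambda>\<alpha>. \<theta> \<alpha> * c \<alpha>)) \<le> K * sup_norm r s n (poly_eval J n c)"
  proof (intro allI impI)
    fix c :: "(nat \<Rightarrow> nat) \<Rightarrow> complex" and \<theta> :: "(nat \<Rightarrow> nat) \<Rightarrow> complex"
    assume \<theta>: "\<forall>\<alpha>. cmod (\<theta> \<alpha>) = 1"
    have bdd: "bdd_above ((\<lambda>z. cmod (poly_eval J n c z)) ` lball r s n)"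
      by (rule bdd_above_poly_eval_lball[OF r rs n])
    show "sup_norm r s n (poly_eval J n (\<lambda>\<alpha>. \<theta> \<alpha> * c \<alpha>)) \<le> K * sup_norm r s n (poly_eval J n c)"
    proof (rule sup_norm_poly_eval_le[OF r rs M])
      show "0 \<le> sup_norm r s n (poly_eval J n c)" by (rule sup_norm_nonneg[OF r rs bdd])
      show "\<forall>\<alpha>\<in>index_cut J n. cmod (\<theta> \<alpha> * c \<alpha>) \<le> test_weight r n \<alpha> * sup_norm r s n (poly_eval J n c)"
      proof
        fix \<alpha> assume \<alpha>: "\<alpha> \<in> index_cut J n"
        have "cmod (\<theta> \<alpha> * c \<alpha>) = cmod (coeff_functional r N n \<alpha> (poly_eval J n c))"
          using coeff_functional_poly_eval[OF _ N IB \<alpha>] r \<theta> by (simp add: norm_mult)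
        also have "\<dots> \<le> test_weight r n \<alpha> * sup_norm r s n (poly_eval J n c)"
          using norm_coeff_functional_le[OF r rs _ N bdd] \<alpha> by (simp add: index_cut_def)
        finally show "cmod (\<theta> \<alpha> * c \<alpha>) \<le> test_weight r n \<alpha> * sup_norm r s n (poly_eval J n c)" .
      qed
    qed
  qed
qed

lemma proj_const_le:
  assumes r: "r > 1" and rs: "ereal r \<le> s" and N: "N \<ge> 1"
    and IB: "index_cut J n \<subseteq> multi_indices n {..<N}"
    and M: "\<forall>z\<in>lball r s n. (\<Sum>\<alpha>\<in>index_cut J n. test_weight r n \<alpha> * cmod (monom n \<alpha> z)) \<le> K"
  shows "proj_const r s J n \<le> K"
proof -
  define Q where "Q = (\<lambda>f. poly_eval J n (\<lambda>\<alpha>. coeff_functional r N n \<alpha> f))"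
  have reproduces: "Q (poly_eval J n c) z = poly_eval J n c z" for c z
    unfolding Q_def poly_eval_def[of J n "\<lambda>\<alpha>. coeff_functional r N n \<alpha> (poly_eval J n c)"]
    using coeff_functional_poly_eval[OF _ N IB, of r _ c] r by (simp add: poly_eval_def[of J n c])
  have bounded: "sup_norm r s n (Q f) \<le> K * sup_norm r s n f"
    if bdd: "bdd_above ((\<lambda>z. cmod (f z)) ` lball r s n)" for f
    unfolding Q_def
  proof (rule sup_norm_poly_eval_le[OF r rs M])
    show "0 \<le> sup_norm r s n f" by (rule sup_norm_nonneg[OF r rs bdd])
    show "\<forall>\<alpha>\<in>index_cut J n. cmod (coeff_functional r N n \<alpha> f) \<le> test_weight r n \<alpha> * sup_norm r s n f"
      using norm_coeff_functional_le[OF r rs _ N bdd] by (simp add: index_cut_def)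
  qed
  show ?thesis
    unfolding proj_const_def
    using nonneg_if_test_weight_sum_le[OF r rs M] reproduces bounded
    by (intro Inf_nonneg_le exI[of _ Q] conjI)
       (auto simp: Q_def poly_eval_def coeff_functional_linear ring_distribs sum.distrib
          sum_distrib_left mult.assoc)
qed

lemma lorentz_constants_le:
  assumes r: "1 < r" "r \<le> 2" and rs: "ereal r \<le> s" and J: "\<forall>\<alpha>\<in>J. deg \<alpha> \<le> m"
    and n1: "n \<ge> 1"
    and hyp: "real n \<le> exp 1 * ln (real n) powr (conj_exp r * (1/r - inv_s s)) * real m"
  shows "hat_lambda r s J n \<le> main_const r s ^ m * ln (real n) powr (real m * (1/r - inv_s s))"
    and "chi_mon r s J n \<le> main_const r s ^ m * ln (real n) powr (real m * (1/r - inv_s s))"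
    and "proj_const r s J n \<le> main_const r s ^ m * ln (real n) powr (real m * (1/r - inv_s s))"
proof -
  \<comment> \<open>for n = 1 the right-hand side of the hypothesis vanishes, since ln 1 = 0\<close>
  have n: "n \<ge> 2" using hyp n1 by (cases "n = 1") auto
  have m: "m \<ge> 1" using hyp n by (cases "m = 0") auto
  have "index_cut J n \<subseteq> {\<alpha>. (\<forall>j\<ge>n. \<alpha> j = 0) \<and> deg \<alpha> \<le> m}"
    using J by (auto simp: index_cut_def)
  then have "\<forall>z\<in>lball r s n. (\<Sum>\<alpha>\<in>index_cut J n. test_weight r n \<alpha> * cmod (monom n \<alpha> z))
      \<le> main_const r s ^ m * (ln (real n) powr (1/r - inv_s s)) ^ m"
    using sum_test_weight_mult_norm_monom_le[OF r rs n m _ hyp] by blast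
  moreover have "(ln (real n) powr (1/r - inv_s s)) ^ m = ln (real n) powr (real m * (1/r - inv_s s))"
    using n by (simp add: powr_realpow[symmetric] powr_powr mult.commute)
  ultimately have M: "\<forall>z\<in>lball r s n. (\<Sum>\<alpha>\<in>index_cut J n. test_weight r n \<alpha> * cmod (monom n \<alpha> z))
      \<le> main_const r s ^ m * ln (real n) powr (real m * (1/r - inv_s s))"
    by simp
  have IB: "index_cut J n \<subseteq> multi_indices n {..<Suc m}"
    using J mem_multi_indices_if_deg_le by (auto simp: index_cut_def lessThan_Suc_atMost)
  show "hat_lambda r s J n \<le> main_const r s ^ m * ln (real n) powr (real m * (1/r - inv_s s))"
    by (rule hat_lambda_le[OF r(1) rs n1 M])
  show "chi_mon r s J n \<le> main_const r s ^ m * ln (real n) powr (real m * (1/r - inv_s s))"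
    by (rule chi_mon_le[OF r(1) rs n1 _ IB M]) simp
  show "proj_const r s J n \<le> main_const r s ^ m * ln (real n) powr (real m * (1/r - inv_s s))"
    by (rule proj_const_le[OF r(1) rs _ IB M]) simp
qed

theorem theorem3p21:
  fixes r :: real and s :: ereal
  assumes "1 < r" and "r \<le> 2" and "ereal r \<le> s"
  shows "\<exists>C>0. \<forall>(J :: nat \<Rightarrow> (nat \<Rightarrow> nat) set).
           (\<forall>m. is_index_set (J m) \<and> (\<forall>\<alpha>\<in>J m. deg \<alpha> \<le> m)) \<longrightarrow>
           (\<forall>m n. n \<ge> 1 \<longrightarrow>
              real n \<le> exp 1 * ln (real n) powr (conj_exp r * (1/r - inv_s s)) * real m \<longrightarrow>
                hat_lambda r s (J m) n \<le> C ^ m * ln (real n) powr (real m * (1/r - inv_s s))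
              \<and> chi_mon r s (J m) n \<le> C ^ m * ln (real n) powr (real m * (1/r - inv_s s))
              \<and> proj_const r s (J m) n \<le> C ^ m * ln (real n) powr (real m * (1/r - inv_s s)))"
proof (intro exI[of _ "main_const r s"] conjI allI impI)
  show "main_const r s > 0" by (simp add: main_const_def)
qed (simp_all add: lorentz_constants_le[OF assms])

end
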